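(* Let $\alpha>\tfrac12$ and let $\alpha_1,\gamma_1,T_{\rm p}$ be: $(\alpha_1,\gamma_1)=(\tfrac12\alpha+\tfrac14,\tfrac32\alpha-\tfrac14)$, $T_{\rm p}=\tfrac{2\alpha-1}{4}\log m$ if $\tfrac12<\alpha\le\tfrac32$; $(\alpha_1,\gamma_1)=(1,2)$, $T_{\rm p}=(\alpha-1)\log m$ if $\alpha>\tfrac32$. Let $T_1=\inf\{t\ge0: q_{\max}(t)\ge m^{-\alpha_1}\log m \text{ or } r_{\max}(t)\ge m^{-\gamma_1}(\log m)^3\}$. Then for every $\delta\in(0,1)$ there exist $M$, $C$ (independent of $m$) such that for all $m\ge M$, with probability at least $1-\delta$ over the initialization, for all $0\le t\le\min\{T_{\rm p},T_1\}$ and all $i\in\{2,\dots,d\}$, $$\Big(\sum_{k=1}^m (w_k^i(t))^2\Big)^{1/2}\le C\max\Big\{\frac{1}{m^{\frac{2\alpha-1}{2}}},\ \frac{(\log m)^5}{m^{5/2}}\Big\}.$$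
   Context: Fix integers $d\ge2$, $m\ge2$. Network $f_\theta(x)=\sum_{k=1}^m a_k\sigma(w_k^{T}x)$ with $\theta=(a_k,w_k)_{k=1}^m$, $w_k=(w_k^1,\dots,w_k^d)^T$; risk $R(\theta)=\tfrac12\int(f_\theta-f)^2\rho\,dx$, where $\rho$ is a compactly supported probability density on $\mathbb R^d$ with $\int x_i^2\rho=1$, $\int x_ix_j\rho=0$ ($i\neq j$); $f$ is bounded on $\mathrm{supp}\,\rho$ with $\int f(x)x\rho(x)dx=(1,0,\dots,0)^T$; $\sigma$ is $C^3$-type (three times differentiable) with $\sigma(0)=0,\sigma'(0)=1,\sigma''(0)=0$, $|\sigma'''|\le C_{\rm L}$. Initialization: independent $a_k(0)\sim N(0,m^{-2\alpha})$, $w_k(0)\sim N(0,m^{-2\alpha}I_d)$; $\theta(t)$ solves $\dot\theta=-\nabla R(\theta)$. $q_{\max}(t)=\max_{k,i}\{|a_k(t)|,|w_k^i(t)|\}$. Linearized trajectories: $\tilde a_k(t)=\tfrac12(a_k(0)+w_k^1(0))e^t+\tfrac12(a_k(0)-w_k^1(0))e^{-t}$, $\tilde w_k^1(t)=\tfrac12(a_k(0)+w_k^1(0))e^t-\tfrac12(a_k(0)-w_k^1(0))e^{-t}$; $r_{\max}(t)=\max_k\{|a_k(t)-\tilde a_k(t)|+|w_k^1(t)-\tilde w_k^1(t)|\}$. $\log$ is natural. *)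

theory Defs
  imports "HOL-Probability.Probability"
begin

text \<open>Neurons are indexed by k in {1..m}; input coordinates by the finite type 'n
  (so d = CARD('n)); the distinguished first coordinate is j0 :: 'n.\<close>

definition dotp :: "('n::finite \<Rightarrow> real) \<Rightarrow> real^'n \<Rightarrow> real" where
  "dotp v x = (\<Sum>j\<in>UNIV. v j * x $ j)"

definition net :: "(real \<Rightarrow> real) \<Rightarrow> nat \<Rightarrow> (nat \<Rightarrow> real) \<Rightarrow> (nat \<Rightarrow> 'n::finite \<Rightarrow> real)
    \<Rightarrow> real^'n \<Rightarrow> real" where
  "net \<sigma> m a w x = (\<Sum>k=1..m. a k * \<sigma> (dotp (w k) x))"

definition risk :: "(real \<Rightarrow> real) \<Rightarrow> (real^'n::finite \<Rightarrow> real) \<Rightarrow> (real^'n \<Rightarrow> real) \<Rightarrow> nat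
    \<Rightarrow> (nat \<Rightarrow> real) \<Rightarrow> (nat \<Rightarrow> 'n \<Rightarrow> real) \<Rightarrow> real" where
  "risk \<sigma> \<rho> f m a w = 1/2 * (\<integral>x. (net \<sigma> m a w x - f x)^2 * \<rho> x \<partial>lborel)"

definition grad_flow :: "(real \<Rightarrow> real) \<Rightarrow> (real^'n::finite \<Rightarrow> real) \<Rightarrow> (real^'n \<Rightarrow> real) \<Rightarrow> nat
    \<Rightarrow> real \<Rightarrow> (real \<Rightarrow> nat \<Rightarrow> real) \<Rightarrow> (real \<Rightarrow> nat \<Rightarrow> 'n \<Rightarrow> real) \<Rightarrow> bool" where
  "grad_flow \<sigma> \<rho> f m T a w \<longleftrightarrow>
    (\<forall>t\<in>{0..<T}. \<forall>k\<in>{1..m}.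
      ((\<lambda>s. a s k) has_real_derivative
          - deriv (\<lambda>u. risk \<sigma> \<rho> f m ((a t)(k := u)) (w t)) (a t k)) (at t within {0..<T})
      \<and> (\<forall>i. ((\<lambda>s. w s k i) has_real_derivative
          - deriv (\<lambda>u. risk \<sigma> \<rho> f m (a t) ((w t)(k := (w t k)(i := u)))) (w t k i))
            (at t within {0..<T})))"

text \<open>Initialization law: a_k(0) ~ N(0, m^(-2 alpha)), w_k(0) ~ N(0, m^(-2 alpha) I_d), all
  independent (normal_density takes the standard deviation m^(-alpha)).\<close>
definition init_measure :: "nat \<Rightarrow> real \<Rightarrow> ((nat \<Rightarrow> real) \<times> (nat \<Rightarrow> 'n::finite \<Rightarrow> real)) measure" where
  "init_measure m \<alpha> =
     pair_measure
       (PiM {1..m} (\<lambda>k. density lborel (normal_density 0 (real m powr (-\<alpha>)))))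
       (PiM {1..m} (\<lambda>k. PiM UNIV (\<lambda>i. density lborel (normal_density 0 (real m powr (-\<alpha>))))))"

definition qmax :: "nat \<Rightarrow> (nat \<Rightarrow> real) \<Rightarrow> (nat \<Rightarrow> 'n::finite \<Rightarrow> real) \<Rightarrow> real" where
  "qmax m a w = Max ({\<bar>a k\<bar> | k. k \<in> {1..m}} \<union> {\<bar>w k i\<bar> | k i. k \<in> {1..m}})"

definition lin_a :: "(nat \<Rightarrow> real) \<Rightarrow> (nat \<Rightarrow> 'n \<Rightarrow> real) \<Rightarrow> 'n \<Rightarrow> nat \<Rightarrow> real \<Rightarrow> real" where
  "lin_a a0 w0 j0 k t = 1/2 * (a0 k + w0 k j0) * exp t + 1/2 * (a0 k - w0 k j0) * exp (-t)"

definition lin_w :: "(nat \<Rightarrow> real) \<Rightarrow> (nat \<Rightarrow> 'n \<Rightarrow> real) \<Rightarrow> 'n \<Rightarrow> nat \<Rightarrow> real \<Rightarrow> real" where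
  "lin_w a0 w0 j0 k t = 1/2 * (a0 k + w0 k j0) * exp t - 1/2 * (a0 k - w0 k j0) * exp (-t)"

definition rmax :: "nat \<Rightarrow> 'n \<Rightarrow> (real \<Rightarrow> nat \<Rightarrow> real) \<Rightarrow> (real \<Rightarrow> nat \<Rightarrow> 'n \<Rightarrow> real) \<Rightarrow> real \<Rightarrow> real" where
  "rmax m j0 a w t = Max {\<bar>a t k - lin_a (a 0) (w 0) j0 k t\<bar> + \<bar>w t k j0 - lin_w (a 0) (w 0) j0 k t\<bar>
                          | k. k \<in> {1..m}}"

definition alpha1 :: "real \<Rightarrow> real" where
  "alpha1 \<alpha> = (if \<alpha> \<le> 3/2 then \<alpha>/2 + 1/4 else 1)"

definition gamma1 :: "real \<Rightarrow> real" where
  "gamma1 \<alpha> = (if \<alpha> \<le> 3/2 then 3/2*\<alpha> - 1/4 else 2)"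

definition Tp :: "real \<Rightarrow> nat \<Rightarrow> real" where
  "Tp \<alpha> m = (if \<alpha> \<le> 3/2 then (2*\<alpha> - 1)/4 * ln (real m) else (\<alpha> - 1) * ln (real m))"

text \<open>T_1 (infimum over the existence interval [0,T) of the trajectory; inf of empty set = +infinity).\<close>
definition T1 :: "real \<Rightarrow> nat \<Rightarrow> 'n::finite \<Rightarrow> real \<Rightarrow> (real \<Rightarrow> nat \<Rightarrow> real) \<Rightarrow> (real \<Rightarrow> nat \<Rightarrow> 'n \<Rightarrow> real) \<Rightarrow> ereal" where
  "T1 \<alpha> m j0 T a w = Inf (ereal ` {t. 0 \<le> t \<and> t < T \<and>
      (qmax m (a t) (w t) \<ge> real m powr (- alpha1 \<alpha>) * ln (real m)
       \<or> rmax m j0 a w t \<ge> real m powr (- gamma1 \<alpha>) * (ln (real m))^3)})"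

end

theory Submission
  imports Defs "HOL-Real_Asymp.Real_Asymp"
begin

(* Fix a coordinate i other than j0 and write W = (w_1^i, ..., w_m^i).  Since rho is isotropic
   and f is uncorrelated with x_i, the gradient flow reads

     d/dt w_k^i = - a_k (sum_l a_l w_l^i + e_k),

   where the errors e_k come only from sigma(z) - z and sigma'(z) - 1 and are O(q^2) as long as
   all parameters are bounded by q with m q^2 <= 1.  The rank-one part can only decrease |W|^2,
   so by Cauchy-Schwarz d/dt |W| <= K q^3 sqrt m.  Before T1 one may take q = m^(-alpha1) log m,
   and integrating up to Tp gives the bound up to the initial size |W(0)|, which is controlled by
   Markov's inequality because E sum_(k,i) (w_k^i(0))^2 = d m^(1 - 2 alpha). *)

section \<open>Real analysis\<close>

lemma abs_sub_le_of_deriv_bound: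
  fixes g g' :: "real \<Rightarrow> real"
  assumes "\<And>x. (g has_real_derivative g' x) (at x)" and "\<And>x. \<bar>x\<bar> \<le> \<bar>z\<bar> \<Longrightarrow> \<bar>g' x\<bar> \<le> B"
  shows "\<bar>g z - g 0\<bar> \<le> B * \<bar>z\<bar>"
proof -
  have "norm (g z - g 0) \<le> B * norm (z - 0)"
    by (rule field_differentiable_bound[of "{-\<bar>z\<bar>..\<bar>z\<bar>}"])
       (auto intro: has_field_derivative_at_within assms)
  then show ?thesis by simp
qed

lemma second_order_remainder_le:
  fixes \<phi> \<phi>1 \<phi>2 :: "real \<Rightarrow> real"
  assumes d1: "\<And>y. (\<phi> has_real_derivative \<phi>1 y) (at y)"
    and d2: "\<And>y. (\<phi>1 has_real_derivative \<phi>2 y) (at y)"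
    and bound: "\<And>y. \<bar>y\<bar> \<le> \<bar>h\<bar> \<Longrightarrow> \<bar>\<phi>2 y\<bar> \<le> K"
  shows "\<bar>\<phi> h - \<phi> 0 - h * \<phi>1 0\<bar> \<le> K * h\<^sup>2"
proof -
  have K: "K \<ge> 0" using bound[of 0] by simp
  have "\<bar>(\<lambda>y. \<phi> y - y * \<phi>1 0) h - (\<lambda>y. \<phi> y - y * \<phi>1 0) 0\<bar> \<le> (K * \<bar>h\<bar>) * \<bar>h\<bar>"
  proof (rule abs_sub_le_of_deriv_bound)
    show "((\<lambda>y. \<phi> y - y * \<phi>1 0) has_real_derivative \<phi>1 y - \<phi>1 0) (at y)" for y
      using d1 by (auto intro!: derivative_eq_intros)
    show "\<bar>\<phi>1 y - \<phi>1 0\<bar> \<le> K * \<bar>h\<bar>" if y: "\<bar>y\<bar> \<le> \<bar>h\<bar>" for y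
    proof -
      have "\<bar>\<phi>1 y - \<phi>1 0\<bar> \<le> K * \<bar>y\<bar>"
        by (rule abs_sub_le_of_deriv_bound[OF d2]) (use bound y in auto)
      with K y show ?thesis by (meson mult_left_mono order.trans)
    qed
  qed
  then show ?thesis by (simp add: power2_eq_square abs_mult_self_eq mult.assoc)
qed

lemma has_real_derivative_of_quadratic_remainder:
  fixes F :: "real \<Rightarrow> real"
  assumes remainder: "\<And>h. \<bar>h\<bar> \<le> 1 \<Longrightarrow> \<bar>F (u0 + h) - F u0 - h * D\<bar> \<le> K * h\<^sup>2"
  shows "(F has_real_derivative D) (at u0)"
proof -
  have "((\<lambda>y. (F y - F u0) / (y - u0) - D) \<longlongrightarrow> 0) (at u0)"
  proof (rule tendsto_0_le[where f = "\<lambda>y. y - u0" and K = K])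
    show "((\<lambda>y. y - u0) \<longlongrightarrow> 0) (at u0)" by (intro tendsto_eq_intros) auto
    have "eventually (\<lambda>y. y \<in> ball u0 1 \<and> y \<noteq> u0) (at u0)"
      using eventually_at_ball[of 1 u0 UNIV] by (auto simp: eventually_at_filter elim: eventually_mono)
    then show "eventually (\<lambda>y. norm ((F y - F u0) / (y - u0) - D) \<le> norm (y - u0) * K) (at u0)"
    proof (rule eventually_mono)
      fix y assume y: "y \<in> ball u0 1 \<and> y \<noteq> u0"
      then have h: "\<bar>y - u0\<bar> \<le> 1" by (simp add: dist_real_def abs_minus_commute)
      have "\<bar>(F y - F u0) / (y - u0) - D\<bar> * \<bar>y - u0\<bar> = \<bar>F y - F u0 - (y - u0) * D\<bar>"
      proof -
        have "((F y - F u0) / (y - u0) - D) * (y - u0) = F y - F u0 - (y - u0) * D"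
          using y by (simp add: field_simps)
        then show ?thesis by (metis abs_mult)
      qed
      moreover have "\<bar>F y - F u0 - (y - u0) * D\<bar> \<le> (\<bar>y - u0\<bar> * K) * \<bar>y - u0\<bar>"
        using remainder[OF h] by (simp add: power2_eq_square abs_mult_self_eq algebra_simps)
      ultimately have "\<bar>(F y - F u0) / (y - u0) - D\<bar> * \<bar>y - u0\<bar> \<le> (\<bar>y - u0\<bar> * K) * \<bar>y - u0\<bar>"
        by simp
      then show "norm ((F y - F u0) / (y - u0) - D) \<le> norm (y - u0) * K"
        unfolding real_norm_def by (rule mult_right_le_imp_le) (use y in simp)
    qed
  qed
  then show ?thesis unfolding has_field_derivative_iff by (rule LIM_zero_cancel)
qed

lemma le_affine_of_deriv_le:
  fixes G G' :: "real \<Rightarrow> real"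
  assumes "a \<le> b"
    and deriv: "\<And>s. s \<in> {a..b} \<Longrightarrow> (G has_real_derivative G' s) (at s within {a..b})"
    and bound: "\<And>s. a < s \<Longrightarrow> s < b \<Longrightarrow> G' s \<le> B"
  shows "G b \<le> G a + B * (b - a)"
proof (cases "a = b")
  case False
  with \<open>a \<le> b\<close> have "a < b" by simp
  then obtain s where s: "s \<in> {a<..<b}" "G b - G a = G' s * (b - a)"
    using mvt_simple[of a b G "\<lambda>s. (*) (G' s)"] deriv
    by (auto simp: has_field_derivative_def mult.commute)
  have "G' s \<le> B" using bound s by simp
  then have "G' s * (b - a) \<le> B * (b - a)" using \<open>a < b\<close> by (simp add: mult_right_mono)
  with s(2) show ?thesis by simp
qed simp

lemma continuous_abs_bounded_on_interval:
  fixes g :: "real \<Rightarrow> real"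
  assumes "continuous_on UNIV g"
  obtains B where "B \<ge> 0" "\<And>z. \<bar>z\<bar> \<le> Y \<Longrightarrow> \<bar>g z\<bar> \<le> B"
proof -
  have "compact (g ` {-Y..Y})"
    by (rule compact_continuous_image) (use assms continuous_on_subset in auto)
  then obtain B where B: "\<forall>y\<in>g ` {-Y..Y}. norm y \<le> B"
    using compact_imp_bounded bounded_iff by blast
  show ?thesis
  proof (rule that[of "max B 0"])
    fix z assume "\<bar>z\<bar> \<le> Y"
    then have "z \<in> {-Y..Y}" by auto
    with B have "norm (g z) \<le> B" by blast
    then show "\<bar>g z\<bar> \<le> max B 0" by simp
  qed simp
qed

lemma sqrt_sum_squares_growth:
  fixes W W' :: "real \<Rightarrow> 'a \<Rightarrow> real"
  assumes t: "0 \<le> t" and B: "0 \<le> B"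
    and deriv: "\<And>s k. s \<in> {0..t} \<Longrightarrow> k \<in> I \<Longrightarrow> ((\<lambda>s. W s k) has_real_derivative W' s k) (at s within {0..t})"
    and bound: "\<And>s. 0 < s \<Longrightarrow> s < t \<Longrightarrow> (\<Sum>k\<in>I. W s k * W' s k) \<le> B * sqrt (\<Sum>k\<in>I. (W s k)\<^sup>2)"
  shows "sqrt (\<Sum>k\<in>I. (W t k)\<^sup>2) \<le> sqrt (\<Sum>k\<in>I. (W 0 k)\<^sup>2) + B * t"
proof (rule field_le_epsilon)
  fix e :: real assume e: "e > 0"
  define N where "N s = (\<Sum>k\<in>I. (W s k)\<^sup>2)" for s
  \<comment> \<open>sqrt is not differentiable at 0, hence the regularisation\<close>
  define G where "G s = sqrt (N s + e\<^sup>2)" for s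
  have N: "N s \<ge> 0" for s unfolding N_def by (simp add: sum_nonneg)
  have G: "G s > 0" for s unfolding G_def using N[of s] e by (simp add: add_nonneg_pos)
  have "G t \<le> G 0 + B * (t - 0)"
  proof (rule le_affine_of_deriv_le[OF t])
    fix s assume s: "s \<in> {0..t}"
    have "(N has_real_derivative (\<Sum>k\<in>I. 2 * W s k * W' s k)) (at s within {0..t})"
      unfolding N_def using deriv[OF s]
      by (auto intro!: DERIV_sum derivative_eq_intros simp: mult_ac)
    then show "(G has_real_derivative (\<Sum>k\<in>I. W s k * W' s k) / G s) (at s within {0..t})"
      unfolding G_def using G[of s] N[of s]
      by (auto intro!: derivative_eq_intros simp: G_def sum_distrib_left[symmetric] mult_ac field_simps)
  next
    fix s assume "0 < s" "s < t"
    then have "(\<Sum>k\<in>I. W s k * W' s k) / G s \<le> B * sqrt (N s) / G s"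
      using bound G[of s] unfolding N_def by (simp add: divide_right_mono)
    also have "\<dots> \<le> B"
    proof -
      have "B * sqrt (N s) \<le> B * G s" unfolding G_def by (rule mult_left_mono) (use B in simp_all)
      then show ?thesis using G[of s] by (simp add: divide_le_eq)
    qed
    finally show "(\<Sum>k\<in>I. W s k * W' s k) / G s \<le> B" .
  qed
  moreover have "sqrt (N t) \<le> G t" "G 0 \<le> sqrt (N 0) + e"
    unfolding G_def using sqrt_add_le_add_sqrt[of "N 0" "e\<^sup>2"] N e by simp_all
  ultimately show "sqrt (\<Sum>k\<in>I. (W t k)\<^sup>2) \<le> sqrt (\<Sum>k\<in>I. (W 0 k)\<^sup>2) + B * t + e"
    unfolding N_def by simp
qed

lemma sum_rank_one_plus_error_ge:
  fixes W A e :: "'a \<Rightarrow> real"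
  assumes "\<And>k. k \<in> I \<Longrightarrow> \<bar>e k\<bar> \<le> E"
  shows "-(E * L2_set A I * L2_set W I) \<le> (\<Sum>k\<in>I. W k * (A k * ((\<Sum>l\<in>I. A l * W l) + e k)))"
proof -
  define L where "L = (\<Sum>l\<in>I. A l * W l)"
  have "W k * (A k * (L + e k)) = A k * W k * L + W k * A k * e k" for k
    by (simp add: algebra_simps)
  then have "(\<Sum>k\<in>I. W k * (A k * (L + e k))) = (\<Sum>k\<in>I. A k * W k * L) + (\<Sum>k\<in>I. W k * A k * e k)"
    by (simp add: sum.distrib)
  also have "(\<Sum>k\<in>I. A k * W k * L) = L\<^sup>2"
    by (simp add: L_def power2_eq_square sum_distrib_right[symmetric])
  finally have "(\<Sum>k\<in>I. W k * (A k * ((\<Sum>l\<in>I. A l * W l) + e k)))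
      = (\<Sum>l\<in>I. A l * W l)\<^sup>2 + (\<Sum>k\<in>I. W k * A k * e k)"
    by (simp add: L_def)
  moreover have "\<bar>\<Sum>k\<in>I. W k * A k * e k\<bar> \<le> E * (\<Sum>k\<in>I. \<bar>A k\<bar> * \<bar>W k\<bar>)"
  proof -
    have "\<bar>W k * A k * e k\<bar> \<le> \<bar>A k\<bar> * \<bar>W k\<bar> * E" if "k \<in> I" for k
      using mult_left_mono[OF assms[OF that], of "\<bar>A k\<bar> * \<bar>W k\<bar>"] by (simp add: abs_mult mult_ac)
    then have "\<bar>\<Sum>k\<in>I. W k * A k * e k\<bar> \<le> (\<Sum>k\<in>I. \<bar>A k\<bar> * \<bar>W k\<bar> * E)"
      by (rule order.trans[OF sum_abs sum_mono])
    also have "\<dots> = E * (\<Sum>k\<in>I. \<bar>A k\<bar> * \<bar>W k\<bar>)" by (simp add: sum_distrib_left mult.commute)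
    finally show ?thesis .
  qed
  moreover have "E * (\<Sum>k\<in>I. \<bar>A k\<bar> * \<bar>W k\<bar>) \<le> E * (L2_set A I * L2_set W I)"
    proof (cases "I = {}")
    case False
    then have "E \<ge> 0" using assms by (meson abs_ge_zero ex_in_conv order.trans)
    then show ?thesis by (intro mult_left_mono L2_set_mult_ineq)
  qed simp
  ultimately show ?thesis
    unfolding mult.assoc[of E] using zero_le_power2[of "\<Sum>l\<in>I. A l * W l"] by linarith
qed

lemma L2_set_le_sqrt_card_mult:
  assumes "\<And>k. k \<in> I \<Longrightarrow> \<bar>A k\<bar> \<le> q"
  shows "L2_set A I \<le> sqrt (real (card I)) * q"
proof (cases "I = {}")
  case False
  then have "q \<ge> 0" using assms by (meson abs_ge_zero ex_in_conv order.trans)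
  have "L2_set A I = L2_set (\<lambda>k. \<bar>A k\<bar>) I" by (simp add: L2_set_def)
  also have "\<dots> \<le> L2_set (\<lambda>k. q) I" by (rule L2_set_mono) (use assms in auto)
  finally show ?thesis using \<open>q \<ge> 0\<close> by (simp add: L2_set_constant)
qed (simp add: L2_set_def)

(* The arithmetic behind abs_defect_sum_le: Z = d q R bounds the preactivations, and the
   activation and slope defects are then O(q^2) once m q^2 <= 1. *)
lemma defect_constant_le:
  fixes CL d R F q m :: real
  assumes "0 \<le> CL" "0 \<le> d" "0 \<le> R" "0 \<le> q" "1 \<le> m" "m * q\<^sup>2 \<le> 1"
  shows "m * q * (CL * (d * q * R)^3 * R) + (m * q * (d * q * R + CL * (d * q * R)^3) + F) * (CL * (d * q * R)\<^sup>2 * R)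
           \<le> (CL * d^3 * R^4 + (d * R + CL * d^3 * R^3 + F) * (CL * d\<^sup>2 * R^3)) * q\<^sup>2"
proof -
  have mq4: "m * q^4 \<le> q\<^sup>2"
    using mult_right_mono[OF assms(6), of "q\<^sup>2"] by (simp add: power_def mult_ac)
  have q2: "q\<^sup>2 \<le> 1"
    using mult_right_mono[OF assms(5), of "q\<^sup>2"] assms(6) by simp
  have "m * q * (CL * (d * q * R)^3 * R) = (CL * d^3 * R^4) * (m * q^4)"
    by (simp add: power_def algebra_simps)
  also have "\<dots> \<le> (CL * d^3 * R^4) * q\<^sup>2"
    using mq4 assms by (intro mult_left_mono) auto
  finally have first: "m * q * (CL * (d * q * R)^3 * R) \<le> (CL * d^3 * R^4) * q\<^sup>2" .
  have "m * q * (d * q * R + CL * (d * q * R)^3) = (d * R) * (m * q\<^sup>2) + (CL * d^3 * R^3) * (m * q^4)"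
    by (simp add: power_def algebra_simps)
  also have "\<dots> \<le> d * R + CL * d^3 * R^3"
    using mult_left_mono[OF assms(6), of "d * R"] mult_left_mono[OF order.trans[OF mq4 q2], of "CL * d^3 * R^3"] assms
    by simp
  finally have second: "(m * q * (d * q * R + CL * (d * q * R)^3) + F) * (CL * d\<^sup>2 * R^3 * q\<^sup>2)
      \<le> (d * R + CL * d^3 * R^3 + F) * (CL * d\<^sup>2 * R^3 * q\<^sup>2)"
    using assms by (intro mult_right_mono) auto
  have eqC: "CL * (d * q * R)\<^sup>2 * R = CL * d\<^sup>2 * R^3 * q\<^sup>2"
    by (simp add: power_def algebra_simps)
  have "m * q * (CL * (d * q * R)^3 * R) + (m * q * (d * q * R + CL * (d * q * R)^3) + F) * (CL * (d * q * R)\<^sup>2 * R)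
      \<le> (CL * d^3 * R^4) * q\<^sup>2 + (d * R + CL * d^3 * R^3 + F) * (CL * d\<^sup>2 * R^3 * q\<^sup>2)"
    unfolding eqC by (rule add_mono[OF first second])
  also have "\<dots> = (CL * d^3 * R^4 + (d * R + CL * d^3 * R^3 + F) * (CL * d\<^sup>2 * R^3)) * q\<^sup>2"
    by (simp add: algebra_simps)
  finally show ?thesis .
qed

section \<open>The network and its activation\<close>

lemma dotp_update: "dotp (v(i := u)) x = dotp v x + (u - v i) * x $ i"
proof -
  have "dotp (v(i := u)) x = (\<Sum>j\<in>UNIV. v j * x $ j + (if j = i then (u - v i) * x $ i else 0))"
    unfolding dotp_def by (intro sum.cong) (auto simp: algebra_simps)
  then show ?thesis by (simp add: dotp_def sum.distrib)
qed

lemma abs_dotp_le: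
  fixes v :: "'n::finite \<Rightarrow> real"
  assumes "\<And>j. \<bar>v j\<bar> \<le> q" "\<And>j. \<bar>x $ j\<bar> \<le> R"
  shows "\<bar>dotp v x\<bar> \<le> real CARD('n) * q * R"
proof -
  have "\<bar>dotp v x\<bar> \<le> (\<Sum>j\<in>UNIV. \<bar>v j\<bar> * \<bar>x $ j\<bar>)"
    unfolding dotp_def by (rule order.trans[OF sum_abs]) (simp add: abs_mult)
  also have "\<dots> \<le> (\<Sum>j\<in>(UNIV :: 'n set). q * R)"
    by (intro sum_mono mult_mono) (use assms abs_ge_zero order.trans in blast)+
  finally show ?thesis by simp
qed

lemma dotp_measurable [measurable]: "(\<lambda>x. dotp v x) \<in> borel_measurable borel"
  unfolding dotp_def by measurable

lemma continuous_dotp [continuous_intros]: "continuous_on S (\<lambda>x. dotp v x)"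
  unfolding dotp_def by (intro continuous_intros)

lemma net_update:
  assumes "k \<in> {1..m}"
  shows "net s m a (w(k := v)) x = net s m a w x - a k * s (dotp (w k) x) + a k * s (dotp v x)"
proof -
  have "net s m a (w(k := v)) x
      = (\<Sum>l=1..m. a l * s (dotp (w l) x) + (if l = k then a k * s (dotp v x) - a k * s (dotp (w k) x) else 0))"
    unfolding net_def by (intro sum.cong) auto
  then show ?thesis using assms by (simp add: net_def sum.distrib)
qed

lemma abs_net_le:
  assumes "\<And>l. l \<in> {1..m} \<Longrightarrow> \<bar>s (dotp (w l) x)\<bar> \<le> S"
  shows "\<bar>net s m a w x\<bar> \<le> (\<Sum>l=1..m. \<bar>a l\<bar>) * S"
proof -
  have "\<bar>net s m a w x\<bar> \<le> (\<Sum>l=1..m. \<bar>a l\<bar> * \<bar>s (dotp (w l) x)\<bar>)"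
    unfolding net_def by (rule order.trans[OF sum_abs]) (simp add: abs_mult)
  also have "\<dots> \<le> (\<Sum>l=1..m. \<bar>a l\<bar> * S)"
    by (intro sum_mono mult_left_mono) (use assms in auto)
  finally show ?thesis by (simp add: sum_distrib_right)
qed

locale activation =
  fixes \<sigma> \<sigma>1 \<sigma>2 \<sigma>3 :: "real \<Rightarrow> real" and CL :: real
  assumes sigma_deriv: "\<And>x. (\<sigma> has_real_derivative \<sigma>1 x) (at x)"
    and sigma1_deriv: "\<And>x. (\<sigma>1 has_real_derivative \<sigma>2 x) (at x)"
    and sigma2_deriv: "\<And>x. (\<sigma>2 has_real_derivative \<sigma>3 x) (at x)"
    and sigma_0: "\<sigma> 0 = 0" and sigma1_0: "\<sigma>1 0 = 1" and sigma2_0: "\<sigma>2 0 = 0"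
    and abs_sigma3_le: "\<And>x. \<bar>\<sigma>3 x\<bar> \<le> CL"
begin

lemma CL_nonneg: "CL \<ge> 0"
  using abs_sigma3_le[of 0] by simp

lemma abs_sigma2_le: "\<bar>\<sigma>2 z\<bar> \<le> CL * \<bar>z\<bar>"
  using abs_sub_le_of_deriv_bound[OF sigma2_deriv abs_sigma3_le] sigma2_0 by simp

lemma abs_sigma1_sub_one_le:
  assumes "\<bar>z\<bar> \<le> Z"
  shows "\<bar>\<sigma>1 z - 1\<bar> \<le> CL * Z\<^sup>2"
proof -
  have "\<bar>\<sigma>1 z - \<sigma>1 0\<bar> \<le> (CL * Z) * \<bar>z\<bar>"
  proof (rule abs_sub_le_of_deriv_bound[OF sigma1_deriv])
    show "\<bar>\<sigma>2 x\<bar> \<le> CL * Z" if "\<bar>x\<bar> \<le> \<bar>z\<bar>" for x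
      using abs_sigma2_le[of x] that assms CL_nonneg by (meson mult_left_mono order.trans)
  qed
  also have "\<dots> \<le> (CL * Z) * Z"
    using assms CL_nonneg by (intro mult_left_mono) auto
  finally show ?thesis using sigma1_0 by (simp add: power2_eq_square)
qed

lemma abs_sigma_sub_le:
  assumes "\<bar>z\<bar> \<le> Z"
  shows "\<bar>\<sigma> z - z\<bar> \<le> CL * Z^3"
proof -
  have "\<bar>(\<lambda>x. \<sigma> x - x) z - (\<lambda>x. \<sigma> x - x) 0\<bar> \<le> (CL * Z\<^sup>2) * \<bar>z\<bar>"
  proof (rule abs_sub_le_of_deriv_bound)
    show "((\<lambda>x. \<sigma> x - x) has_real_derivative \<sigma>1 x - 1) (at x)" for x
      using sigma_deriv by (auto intro!: derivative_eq_intros)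
    show "\<bar>\<sigma>1 x - 1\<bar> \<le> CL * Z\<^sup>2" if "\<bar>x\<bar> \<le> \<bar>z\<bar>" for x
      using abs_sigma1_sub_one_le that assms by simp
  qed
  also have "\<dots> \<le> (CL * Z\<^sup>2) * Z"
    using assms CL_nonneg by (intro mult_left_mono) auto
  finally show ?thesis using sigma_0 by (simp add: power3_eq_cube power2_eq_square mult_ac)
qed

lemma continuous_sigma: "continuous_on UNIV \<sigma>" "continuous_on UNIV \<sigma>1" "continuous_on UNIV \<sigma>2"
  using sigma_deriv sigma1_deriv sigma2_deriv
  by (auto intro!: DERIV_isCont continuous_at_imp_continuous_on)

lemma sigma_measurable [measurable]:
  "\<sigma> \<in> borel_measurable borel" "\<sigma>1 \<in> borel_measurable borel"
  using continuous_sigma by (auto intro: borel_measurable_continuous_onI)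

lemma sigma_chain [derivative_intros]:
  "(g has_real_derivative g') (at x) \<Longrightarrow> ((\<lambda>h. \<sigma> (g h)) has_real_derivative \<sigma>1 (g x) * g') (at x)"
  "(g has_real_derivative g') (at x) \<Longrightarrow> ((\<lambda>h. \<sigma>1 (g h)) has_real_derivative \<sigma>2 (g x) * g') (at x)"
  using DERIV_chain'[of g g' x UNIV \<sigma> "\<sigma>1 (g x)"] DERIV_chain'[of g g' x UNIV \<sigma>1 "\<sigma>2 (g x)"]
    sigma_deriv sigma1_deriv by auto

lemma net_measurable [measurable]: "(\<lambda>x. net \<sigma> m a w x) \<in> borel_measurable borel"
  unfolding net_def by measurable

lemma square_shift_remainder_le:
  assumes Y: "\<And>y. \<bar>y\<bar> \<le> 1 \<Longrightarrow> \<bar>z + y * c\<bar> \<le> Y"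
    and B1: "\<And>u. \<bar>u\<bar> \<le> Y \<Longrightarrow> \<bar>\<sigma>1 u\<bar> \<le> B1" and B2: "\<And>u. \<bar>u\<bar> \<le> Y \<Longrightarrow> \<bar>\<sigma>2 u\<bar> \<le> B2"
    and Q: "\<And>y. \<bar>y\<bar> \<le> 1 \<Longrightarrow> \<bar>r + a * \<sigma> (z + y * c)\<bar> \<le> Q"
    and c: "\<bar>c\<bar> \<le> R" and h: "\<bar>h\<bar> \<le> 1"
  shows "\<bar>(r + a * \<sigma> (z + h * c))\<^sup>2 - (r + a * \<sigma> z)\<^sup>2 - h * (2 * (r + a * \<sigma> z) * (a * \<sigma>1 z * c))\<bar>
           \<le> (2 * (\<bar>a\<bar> * B1 * R)\<^sup>2 + 2 * Q * (\<bar>a\<bar> * B2 * R\<^sup>2)) * h\<^sup>2"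
proof -
  define P where "P y = r + a * \<sigma> (z + y * c)" for y
  define P1 where "P1 y = a * \<sigma>1 (z + y * c) * c" for y
  have dP: "(P has_real_derivative P1 y) (at y)" for y
    unfolding P_def P1_def by (auto intro!: derivative_eq_intros)
  have "\<bar>(P h)\<^sup>2 - (P 0)\<^sup>2 - h * (2 * P 0 * P1 0)\<bar> \<le> (2 * (\<bar>a\<bar> * B1 * R)\<^sup>2 + 2 * Q * (\<bar>a\<bar> * B2 * R\<^sup>2)) * h\<^sup>2"
  proof (rule second_order_remainder_le[where \<phi> = "\<lambda>y. (P y)\<^sup>2"])
    show "((\<lambda>y. (P y)\<^sup>2) has_real_derivative 2 * P y * P1 y) (at y)" for y
      using dP by (auto intro!: derivative_eq_intros)
    show "((\<lambda>y. 2 * P y * P1 y) has_real_derivative 2 * (P1 y)\<^sup>2 + 2 * P y * (a * \<sigma>2 (z + y * c) * c * c)) (at y)" for y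
      using dP unfolding P1_def
      by (auto intro!: derivative_eq_intros simp: power2_eq_square algebra_simps)
    show "\<bar>2 * (P1 y)\<^sup>2 + 2 * P y * (a * \<sigma>2 (z + y * c) * c * c)\<bar> \<le> 2 * (\<bar>a\<bar> * B1 * R)\<^sup>2 + 2 * Q * (\<bar>a\<bar> * B2 * R\<^sup>2)"
      if "\<bar>y\<bar> \<le> \<bar>h\<bar>" for y
    proof -
      have y: "\<bar>y\<bar> \<le> 1" and zy: "\<bar>z + y * c\<bar> \<le> Y" using that h Y by auto
      have R: "R \<ge> 0" using c by simp
      have "B1 \<ge> 0" using B1[OF zy] by (meson abs_ge_zero order.trans)
      then have "\<bar>P1 y\<bar> \<le> \<bar>a\<bar> * B1 * R"
        unfolding P1_def abs_mult by (intro mult_mono) (use B1 zy c R in auto)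
      then have P1_sq: "(P1 y)\<^sup>2 \<le> (\<bar>a\<bar> * B1 * R)\<^sup>2"
        by (metis abs_ge_zero abs_le_square_iff power2_abs power_mono)
      have "\<bar>a * \<sigma>2 (z + y * c) * c * c\<bar> = \<bar>a\<bar> * \<bar>\<sigma>2 (z + y * c)\<bar> * (\<bar>c\<bar> * \<bar>c\<bar>)"
        by (simp add: abs_mult)
      also have "\<dots> \<le> \<bar>a\<bar> * B2 * (R * R)"
        by (intro mult_mono) (use B2[OF zy] c R in auto)
      finally have aB2: "\<bar>a * \<sigma>2 (z + y * c) * c * c\<bar> \<le> \<bar>a\<bar> * B2 * (R * R)" .
      have "\<bar>P y * (a * \<sigma>2 (z + y * c) * c * c)\<bar> \<le> Q * (\<bar>a\<bar> * B2 * R\<^sup>2)"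
        unfolding abs_mult[of "P y"] power2_eq_square
        by (rule mult_mono) (use Q[OF y] aB2 in \<open>auto simp: P_def\<close>)
      moreover have "0 \<le> (P1 y)\<^sup>2" by simp
      ultimately show ?thesis using P1_sq unfolding mult.assoc abs_le_iff by linarith
    qed
  qed
  then show ?thesis by (simp add: P_def P1_def)
qed

lemma continuous_on_sigma_dotp [continuous_intros]:
  "continuous_on S (\<lambda>x. \<sigma> (dotp v x))" "continuous_on S (\<lambda>x. \<sigma>1 (dotp v x))"
  by (rule continuous_on_compose2[OF continuous_sigma(1) continuous_dotp], simp,
      rule continuous_on_compose2[OF continuous_sigma(2) continuous_dotp], simp)

lemma continuous_on_net [continuous_intros]: "continuous_on S (\<lambda>x. net \<sigma> m a w x)"
  unfolding net_def by (intro continuous_intros)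

lemma abs_net_le_small:
  assumes "\<And>l. l \<in> {1..m} \<Longrightarrow> \<bar>a l\<bar> \<le> q" and "\<And>l. l \<in> {1..m} \<Longrightarrow> \<bar>dotp (w l) x\<bar> \<le> Z"
  shows "\<bar>net \<sigma> m a w x\<bar> \<le> real m * q * (Z + CL * Z^3)"
proof (cases "m = 0")
  case False
  then have "1 \<in> {1..m}" by simp
  then have "Z \<ge> 0" using assms(2) by (meson abs_ge_zero order.trans)
  have "\<bar>net \<sigma> m a w x\<bar> \<le> (\<Sum>l=1..m. \<bar>a l\<bar>) * (Z + CL * Z^3)"
  proof (rule abs_net_le)
    fix l assume l: "l \<in> {1..m}"
    show "\<bar>\<sigma> (dotp (w l) x)\<bar> \<le> Z + CL * Z^3"
      using abs_sigma_sub_le[OF assms(2)[OF l]] assms(2)[OF l] by linarith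
  qed
  also have "\<dots> \<le> (\<Sum>l=1..m. q) * (Z + CL * Z^3)"
    using \<open>Z \<ge> 0\<close> CL_nonneg by (intro mult_right_mono sum_mono) (use assms(1) in auto)
  finally show ?thesis by simp
qed (simp add: net_def)

end

section \<open>Initialization\<close>

lemma nn_integral_normal_square:
  assumes s: "s > 0"
  shows "(\<integral>\<^sup>+ v. ennreal (v\<^sup>2) \<partial>density lborel (normal_density 0 s)) = ennreal (s\<^sup>2)"
proof -
  have int: "integrable lborel (\<lambda>v. normal_density 0 s v * v\<^sup>2)"
    using integrable_normal_moment[where k = 2 and \<mu> = 0 and \<sigma> = s] s by simp
  have "(\<integral>v. normal_density 0 s v * (v - 0) ^ (2 * 1) \<partial>lborel) = fact (2 * 1) / ((2 / s\<^sup>2) ^ 1 * fact 1)"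
    by (rule integral_normal_moment_even) (use s in simp)
  then have "(\<integral>v. normal_density 0 s v * v\<^sup>2 \<partial>lborel) = s\<^sup>2"
    using s by simp
  moreover have "(\<integral>\<^sup>+ v. ennreal (v\<^sup>2) \<partial>density lborel (normal_density 0 s))
      = (\<integral>\<^sup>+ v. ennreal (normal_density 0 s v * v\<^sup>2) \<partial>lborel)"
    by (subst nn_integral_density) (auto simp: ennreal_mult)
  ultimately show ?thesis
    using int by (simp add: nn_integral_eq_integral)
qed

lemma nn_integral_PiM_component:
  assumes M: "\<And>j. j \<in> I \<Longrightarrow> prob_space (M j)" and i: "i \<in> I" and h: "h \<in> borel_measurable (M i)"
  shows "(\<integral>\<^sup>+ \<omega>. h (\<omega> i) \<partial>PiM I M) = (\<integral>\<^sup>+ x. h x \<partial>M i)"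
proof -
  have "distr (PiM I M) (M i) (\<lambda>\<omega>. \<omega> i) = M i"
    by (rule distr_PiM_component) (use M i in auto)
  then have "(\<integral>\<^sup>+ x. h x \<partial>M i) = (\<integral>\<^sup>+ x. h x \<partial>distr (PiM I M) (M i) (\<lambda>\<omega>. \<omega> i))"
    by simp
  also have "\<dots> = (\<integral>\<^sup>+ \<omega>. h (\<omega> i) \<partial>PiM I M)"
    using h i by (intro nn_integral_distr) (auto intro: measurable_component_singleton)
  finally show ?thesis ..
qed

lemma nn_integral_snd_pair:
  assumes "prob_space M1" "prob_space M2" and h [measurable]: "h \<in> borel_measurable M2"
  shows "(\<integral>\<^sup>+ \<theta>. h (snd \<theta>) \<partial>(M1 \<Otimes>\<^sub>M M2)) = (\<integral>\<^sup>+ y. h y \<partial>M2)"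
proof -
  interpret M1: prob_space M1 by fact
  interpret M2: prob_space M2 by fact
  interpret pair_prob_space M1 M2 ..
  have "(\<integral>\<^sup>+ \<theta>. h (snd \<theta>) \<partial>(M1 \<Otimes>\<^sub>M M2)) = (\<integral>\<^sup>+ y. \<integral>\<^sup>+ x. h y \<partial>M1 \<partial>M2)"
    using nn_integral_snd[of "\<lambda>\<theta>. h (snd \<theta>)"] by simp
  also have "\<dots> = (\<integral>\<^sup>+ y. h y \<partial>M2)"
    by (simp add: M1.emeasure_space_1)
  finally show ?thesis .
qed

lemma prob_space_init_measure:
  assumes "m \<ge> 1"
  shows "prob_space (init_measure m \<alpha> :: ((nat \<Rightarrow> real) \<times> (nat \<Rightarrow> 'n::finite \<Rightarrow> real)) measure)"
  unfolding init_measure_def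
  by (intro prob_space_pair prob_space_PiM prob_space_normal_density) (use assms in auto)

lemma measurable_PiM_coordinate:
  assumes "k \<in> I" "g \<in> borel_measurable (M k)"
  shows "(\<lambda>\<omega>. g (\<omega> k)) \<in> borel_measurable (PiM I M)"
  by (rule measurable_compose[OF measurable_component_singleton]) (use assms in auto)

lemma measurable_init_inner:
  fixes g :: "real \<Rightarrow> 'b::topological_space"
  assumes "k \<in> {1..m}" and g: "g \<in> borel_measurable borel"
  shows "(\<lambda>\<theta>. g (snd \<theta> k i)) \<in> borel_measurable (init_measure m \<alpha> :: ((nat \<Rightarrow> real) \<times> (nat \<Rightarrow> 'n::finite \<Rightarrow> real)) measure)"
proof -
  have "g \<in> borel_measurable (density lborel (normal_density 0 (real m powr (-\<alpha>))))"
    using g by simp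
  then show ?thesis
    unfolding init_measure_def
    by (intro measurable_compose[OF measurable_snd] measurable_PiM_coordinate assms(1) UNIV_I)
qed

lemma nn_integral_init_inner_square:
  assumes k: "k \<in> {1..m}"
  shows "(\<integral>\<^sup>+ \<theta>. ennreal ((snd \<theta> k i)\<^sup>2)
           \<partial>(init_measure m \<alpha> :: ((nat \<Rightarrow> real) \<times> (nat \<Rightarrow> 'n::finite \<Rightarrow> real)) measure))
         = ennreal ((real m powr (-\<alpha>))\<^sup>2)"
proof -
  define G where "G = density lborel (normal_density 0 (real m powr (-\<alpha>)))"
  have G: "prob_space G"
    unfolding G_def using k by (intro prob_space_normal_density) simp
  then have G_UNIV: "prob_space (PiM (UNIV :: 'n set) (\<lambda>_. G))"
    by (intro prob_space_PiM) auto
  have sq: "(\<lambda>v. ennreal (v\<^sup>2)) \<in> borel_measurable G"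
    unfolding G_def by (simp add: borel_measurable_continuous_onI continuous_intros)
  then have sq_i: "(\<lambda>z. ennreal ((z i)\<^sup>2)) \<in> borel_measurable (PiM (UNIV :: 'n set) (\<lambda>_. G))"
    by (intro measurable_PiM_coordinate UNIV_I)
  have "(\<integral>\<^sup>+ \<theta>. ennreal ((snd \<theta> k i)\<^sup>2) \<partial>init_measure m \<alpha>)
      = (\<integral>\<^sup>+ y. ennreal ((y k i)\<^sup>2) \<partial>PiM {1..m} (\<lambda>_. PiM (UNIV :: 'n set) (\<lambda>_. G)))"
    unfolding init_measure_def G_def[symmetric]
    by (rule nn_integral_snd_pair)
       (use G G_UNIV k sq_i in \<open>auto intro!: prob_space_PiM measurable_PiM_coordinate simp: G_def\<close>)
  also have "\<dots> = (\<integral>\<^sup>+ z. ennreal ((z i)\<^sup>2) \<partial>PiM (UNIV :: 'n set) (\<lambda>_. G))"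
    by (rule nn_integral_PiM_component[where h = "\<lambda>z. ennreal ((z i)\<^sup>2)"]) (use G_UNIV k sq_i in auto)
  also have "\<dots> = (\<integral>\<^sup>+ v. ennreal (v\<^sup>2) \<partial>G)"
    by (rule nn_integral_PiM_component[where h = "\<lambda>v. ennreal (v\<^sup>2)"]) (use G sq in auto)
  also have "\<dots> = ennreal ((real m powr (-\<alpha>))\<^sup>2)"
    unfolding G_def using k by (intro nn_integral_normal_square) simp
  finally show ?thesis .
qed

lemma nn_integral_init_inner_total:
  assumes "m \<ge> 1"
  shows "(\<integral>\<^sup>+ \<theta>. ennreal (\<Sum>k=1..m. \<Sum>i\<in>UNIV. (snd \<theta> k i)\<^sup>2)
           \<partial>(init_measure m \<alpha> :: ((nat \<Rightarrow> real) \<times> (nat \<Rightarrow> 'n::finite \<Rightarrow> real)) measure))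
         = ennreal (real m * real CARD('n) * (real m powr (-\<alpha>))\<^sup>2)"
proof -
  let ?M = "init_measure m \<alpha> :: ((nat \<Rightarrow> real) \<times> (nat \<Rightarrow> 'n \<Rightarrow> real)) measure"
  have meas: "(\<lambda>\<theta>. ennreal ((snd \<theta> k i)\<^sup>2)) \<in> borel_measurable ?M" if "k \<in> {1..m}" for k i
    by (rule measurable_init_inner[OF that]) (simp add: borel_measurable_continuous_onI continuous_intros)
  have "(\<integral>\<^sup>+ \<theta>. ennreal (\<Sum>k=1..m. \<Sum>i\<in>UNIV. (snd \<theta> k i)\<^sup>2) \<partial>?M)
      = (\<integral>\<^sup>+ \<theta>. (\<Sum>k=1..m. \<Sum>i\<in>UNIV. ennreal ((snd \<theta> k i)\<^sup>2)) \<partial>?M)"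
    by (simp add: sum_nonneg flip: sum_ennreal)
  also have "\<dots> = (\<Sum>k=1..m. \<integral>\<^sup>+ \<theta>. (\<Sum>i\<in>UNIV. ennreal ((snd \<theta> k i)\<^sup>2)) \<partial>?M)"
    by (intro nn_integral_sum borel_measurable_sum meas)
  also have "\<dots> = (\<Sum>k=1..m. \<Sum>i\<in>UNIV. \<integral>\<^sup>+ \<theta>. ennreal ((snd \<theta> k i)\<^sup>2) \<partial>?M)"
    by (intro sum.cong refl nn_integral_sum meas)
  also have "\<dots> = (\<Sum>k=1..m. \<Sum>i\<in>(UNIV :: 'n set). ennreal ((real m powr (-\<alpha>))\<^sup>2))"
    by (intro sum.cong refl nn_integral_init_inner_square) simp
  also have "\<dots> = ennreal (real m * real CARD('n) * (real m powr (-\<alpha>))\<^sup>2)"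
    by (simp add: ennreal_of_nat_eq_real_of_nat ennreal_mult mult.assoc)
  finally show ?thesis .
qed

lemma (in prob_space) Markov_event:
  fixes X :: "'a \<Rightarrow> real"
  assumes X: "X \<in> borel_measurable M" "\<And>x. 0 \<le> X x"
    and total: "(\<integral>\<^sup>+ x. ennreal (X x) \<partial>M) = ennreal c" and c: "c > 0" and \<delta>: "\<delta> > 0"
  obtains E where "E \<in> sets M" "prob E \<ge> 1 - \<delta>" "\<And>x. x \<in> E \<Longrightarrow> X x \<le> c / \<delta>"
proof -
  define B where "B = {x \<in> space M. c / \<delta> \<le> X x}"
  have B: "B \<in> sets M" unfolding B_def using X(1) by simp
  have "integrable M X" using total X by (intro integrableI_nonneg) auto
  moreover have "integral\<^sup>L M X = c" using total X c by (subst integral_eq_nn_integral) auto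
  ultimately have "prob B \<le> \<delta>"
    using integral_Markov_inequality_measure[of M X "space M" "c / \<delta>"] X(2) c \<delta> by (simp add: B_def)
  show ?thesis
  proof (rule that[of "space M - B"])
    show "space M - B \<in> sets M" using B by simp
    show "prob (space M - B) \<ge> 1 - \<delta>" using B \<open>prob B \<le> \<delta>\<close> by (simp add: prob_compl)
    fix x assume "x \<in> space M - B"
    then have "\<not> c / \<delta> \<le> X x" by (simp add: B_def)
    then show "X x \<le> c / \<delta>" by simp
  qed
qed

lemma init_inner_weights_small:
  assumes m: "m \<ge> 1" and \<delta>: "\<delta> > 0"
  obtains E where "E \<in> sets (init_measure m \<alpha> :: ((nat \<Rightarrow> real) \<times> (nat \<Rightarrow> 'n::finite \<Rightarrow> real)) measure)"
    and "measure (init_measure m \<alpha> :: ((nat \<Rightarrow> real) \<times> (nat \<Rightarrow> 'n \<Rightarrow> real)) measure) E \<ge> 1 - \<delta>"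
    and "\<And>\<theta> i. \<theta> \<in> E \<Longrightarrow> sqrt (\<Sum>k=1..m. (snd \<theta> k i)\<^sup>2) \<le> sqrt (real CARD('n) / \<delta>) * (1 / real m powr ((2*\<alpha> - 1)/2))"
proof -
  let ?M = "init_measure m \<alpha> :: ((nat \<Rightarrow> real) \<times> (nat \<Rightarrow> 'n \<Rightarrow> real)) measure"
  interpret prob_space ?M using m by (rule prob_space_init_measure)
  define c where "c = real m * real CARD('n) * (real m powr (-\<alpha>))\<^sup>2"
  have variance: "real m * (real m powr (-\<alpha>))\<^sup>2 = (1 / real m powr ((2*\<alpha> - 1)/2))\<^sup>2"
    using m
    by (simp add: powr_power powr_mult_base powr_minus_divide[symmetric] field_simps flip: powr_add)
       (rule arg_cong[where f = "\<lambda>e. real m powr e"], simp add: field_simps)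
  have scale: "c / \<delta> = real CARD('n) / \<delta> * (1 / real m powr ((2*\<alpha> - 1)/2))\<^sup>2"
    unfolding variance[symmetric] c_def by (simp add: mult_ac)
  have X_meas: "(\<lambda>\<theta>. \<Sum>k=1..m. \<Sum>i\<in>UNIV. (snd \<theta> k i)\<^sup>2) \<in> borel_measurable ?M"
    by (intro borel_measurable_sum measurable_init_inner) (simp_all add: borel_measurable_continuous_onI continuous_intros)
  obtain E where E: "E \<in> sets ?M" "prob E \<ge> 1 - \<delta>"
    and X: "\<And>\<theta>. \<theta> \<in> E \<Longrightarrow> (\<Sum>k=1..m. \<Sum>i\<in>UNIV. (snd \<theta> k i)\<^sup>2) \<le> c / \<delta>"
    by (rule Markov_event[OF X_meas _ nn_integral_init_inner_total[OF m, folded c_def] _ \<delta>])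
       (use m in \<open>auto simp: c_def intro!: sum_nonneg\<close>)
  show ?thesis
  proof (rule that[OF E])
    fix \<theta> i assume "\<theta> \<in> E"
    have "(\<Sum>k=1..m. (snd \<theta> k i)\<^sup>2) \<le> (\<Sum>k=1..m. \<Sum>i\<in>UNIV. (snd \<theta> k i)\<^sup>2)"
      by (intro sum_mono member_le_sum) auto
    also have "\<dots> \<le> real CARD('n) / \<delta> * (1 / real m powr ((2*\<alpha> - 1)/2))\<^sup>2"
      using X[OF \<open>\<theta> \<in> E\<close>] unfolding scale .
    finally have "sqrt (\<Sum>k=1..m. (snd \<theta> k i)\<^sup>2)
        \<le> sqrt (real CARD('n) / \<delta>) * sqrt ((1 / real m powr ((2*\<alpha> - 1)/2))\<^sup>2)"
      by (metis real_sqrt_le_mono real_sqrt_mult)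
    then show "sqrt (\<Sum>k=1..m. (snd \<theta> k i)\<^sup>2) \<le> sqrt (real CARD('n) / \<delta>) * (1 / real m powr ((2*\<alpha> - 1)/2))"
      by (simp only: real_sqrt_abs abs_of_nonneg[of "1 / real m powr ((2*\<alpha> - 1)/2)"] powr_ge_zero
          divide_nonneg_nonneg zero_le_one)
  qed
qed

section \<open>Exit threshold\<close>

lemma abs_le_qmax:
  assumes "l \<in> {1..m}"
  shows "\<bar>a l\<bar> \<le> qmax m a w" "\<bar>w l j\<bar> \<le> qmax m a w"
proof -
  have "{\<bar>w k i\<bar> | k i. k \<in> {1..m}} = (\<lambda>(k, i). \<bar>w k i\<bar>) ` ({1..m} \<times> UNIV)"
    by auto
  then have fin: "finite ({\<bar>a k\<bar> | k. k \<in> {1..m}} \<union> {\<bar>w k i\<bar> | k i. k \<in> {1..m}})"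
    by simp
  show "\<bar>a l\<bar> \<le> qmax m a w" unfolding qmax_def by (rule Max_ge[OF fin]) (use assms in blast)
  show "\<bar>w l j\<bar> \<le> qmax m a w" unfolding qmax_def by (rule Max_ge[OF fin]) (use assms in blast)
qed

definition qmax_threshold :: "real \<Rightarrow> nat \<Rightarrow> real" where
  "qmax_threshold \<alpha> m = real m powr (- alpha1 \<alpha>) * ln (real m)"

lemma qmax_lt_threshold_before_T1:
  assumes "0 \<le> s" "s < t" "t < T" "ereal t \<le> T1 \<alpha> m j T a w"
  shows "qmax m (a s) (w s) < qmax_threshold \<alpha> m"
proof (rule ccontr)
  assume "\<not> qmax m (a s) (w s) < qmax_threshold \<alpha> m"
  with assms(1-3) have "s \<in> {t. 0 \<le> t \<and> t < T \<and>
      (qmax m (a t) (w t) \<ge> real m powr (- alpha1 \<alpha>) * ln (real m)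
       \<or> rmax m j a w t \<ge> real m powr (- gamma1 \<alpha>) * (ln (real m))^3)}"
    unfolding qmax_threshold_def by auto
  then have "T1 \<alpha> m j T a w \<le> ereal s"
    unfolding T1_def by (rule Inf_lower[OF imageI])
  with assms(4) have "ereal t \<le> ereal s" by (rule order.trans)
  with assms(2) show False by simp
qed

lemma eventually_scaling_moderate_alpha:
  assumes \<alpha>: "1/2 < \<alpha>"
  shows "\<forall>\<^sub>F x in at_top. 1 \<le> (x::real) \<and> x * (x powr (-(\<alpha>/2 + 1/4)) * ln x)\<^sup>2 \<le> 1 \<and>
    (2*\<alpha> - 1)/4 * ln x * (x powr (-(\<alpha>/2 + 1/4)) * ln x) ^ 3 * sqrt x
      \<le> \<alpha> * max (1 / x powr ((2*\<alpha> - 1)/2)) (ln x ^ 5 / x powr (5/2))"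
proof -
  have "\<forall>\<^sub>F x in at_top. 1 \<le> (x::real)" by (rule eventually_ge_at_top)
  moreover have "\<forall>\<^sub>F x in at_top. (x::real) * (x powr (-(\<alpha>/2 + 1/4)) * ln x)\<^sup>2 \<le> 1"
    using \<alpha> by real_asymp
  moreover have "\<forall>\<^sub>F x in at_top. ln (x::real) ^ 4 * x powr (-(3*\<alpha>/2 + 1/4)) \<le> x powr (-(\<alpha> - 1/2))"
    using \<alpha> by real_asymp
  ultimately show ?thesis
  proof eventually_elim
    case (elim x)
    have "(x powr (-(\<alpha>/2 + 1/4))) ^ 3 * x powr (1/2) = x powr (-(3*\<alpha>/2 + 1/4))"
      using elim(1) by (simp add: powr_power flip: powr_add) (rule arg_cong[where f = "(powr) x"], linarith)
    moreover have "(2*\<alpha> - 1)/4 * ln x * (x powr (-(\<alpha>/2 + 1/4)) * ln x) ^ 3 * sqrt x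
        = (2*\<alpha> - 1)/4 * (ln x ^ 4 * ((x powr (-(\<alpha>/2 + 1/4))) ^ 3 * x powr (1/2)))"
      using elim(1) by (simp add: powr_half_sqrt power_mult_distrib eval_nat_numeral mult_ac)
    ultimately have "(2*\<alpha> - 1)/4 * ln x * (x powr (-(\<alpha>/2 + 1/4)) * ln x) ^ 3 * sqrt x
        = (2*\<alpha> - 1)/4 * (ln x ^ 4 * x powr (-(3*\<alpha>/2 + 1/4)))"
      by simp
    also have "\<dots> \<le> \<alpha> * x powr (-(\<alpha> - 1/2))"
      using elim(3) \<alpha> by (intro mult_mono) auto
    also have "\<dots> \<le> \<alpha> * max (1 / x powr ((2*\<alpha> - 1)/2)) (ln x ^ 5 / x powr (5/2))"
      using \<alpha> by (intro mult_left_mono) (auto simp: powr_minus_divide field_simps)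
    finally show ?case using elim by simp
  qed
qed

lemma eventually_scaling_large_alpha:
  assumes \<alpha>: "3/2 < \<alpha>"
  shows "\<forall>\<^sub>F x in at_top. 1 \<le> (x::real) \<and> x * (x powr (-1) * ln x)\<^sup>2 \<le> 1 \<and>
    (\<alpha> - 1) * ln x * (x powr (-1) * ln x) ^ 3 * sqrt x
      \<le> \<alpha> * max (1 / x powr ((2*\<alpha> - 1)/2)) (ln x ^ 5 / x powr (5/2))"
proof -
  have "\<forall>\<^sub>F x in at_top. 1 \<le> (x::real)" by (rule eventually_ge_at_top)
  moreover have "\<forall>\<^sub>F x in at_top. (x::real) * (x powr (-1) * ln x)\<^sup>2 \<le> 1" by real_asymp
  moreover have "\<forall>\<^sub>F x in at_top. (\<alpha> - 1) * ln (x::real) * (x powr (-1) * ln x) ^ 3 * sqrt x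
      \<le> \<alpha> * (ln x ^ 5 / x powr (5/2))"
    using \<alpha> by real_asymp
  ultimately show ?thesis
  proof eventually_elim
    case (elim x)
    have "\<alpha> * (ln x ^ 5 / x powr (5/2)) \<le> \<alpha> * max (1 / x powr ((2*\<alpha> - 1)/2)) (ln x ^ 5 / x powr (5/2))"
      using \<alpha> by (intro mult_left_mono) auto
    from order.trans[OF elim(3) this] show ?case using elim by simp
  qed
qed

lemma eventually_threshold_scaling:
  assumes \<alpha>: "\<alpha> > 1/2"
  shows "\<forall>\<^sub>F m in sequentially. 1 \<le> real m \<and> real m * (qmax_threshold \<alpha> m)\<^sup>2 \<le> 1 \<and>
    Tp \<alpha> m * qmax_threshold \<alpha> m ^ 3 * sqrt (real m)
      \<le> \<alpha> * max (1 / real m powr ((2*\<alpha> - 1)/2)) (ln (real m) ^ 5 / real m powr (5/2))"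
proof -
  have "\<forall>\<^sub>F x in at_top. 1 \<le> x \<and> x * (x powr (- alpha1 \<alpha>) * ln x)\<^sup>2 \<le> 1 \<and>
      (if \<alpha> \<le> 3/2 then (2*\<alpha> - 1)/4 * ln x else (\<alpha> - 1) * ln x) * (x powr (- alpha1 \<alpha>) * ln x) ^ 3 * sqrt x
        \<le> \<alpha> * max (1 / x powr ((2*\<alpha> - 1)/2)) (ln x ^ 5 / x powr (5/2))"
    using eventually_scaling_moderate_alpha[OF \<alpha>] eventually_scaling_large_alpha[of \<alpha>]
    by (cases "\<alpha> \<le> 3/2") (simp_all add: alpha1_def)
  from eventually_compose_filterlim[OF this filterlim_real_sequentially] show ?thesis
    unfolding qmax_threshold_def Tp_def by (simp add: if_distrib[of "\<lambda>c. c * _"])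
qed

definition small_inner_until_exit ::
    "(real \<Rightarrow> real) \<Rightarrow> (real^'n::finite \<Rightarrow> real) \<Rightarrow> (real^'n \<Rightarrow> real) \<Rightarrow> real \<Rightarrow> 'n \<Rightarrow> nat \<Rightarrow> real
      \<Rightarrow> (nat \<Rightarrow> real) \<times> (nat \<Rightarrow> 'n \<Rightarrow> real) \<Rightarrow> bool" where
  "small_inner_until_exit \<sigma> \<rho> f \<alpha> j0 m C \<theta>0 \<longleftrightarrow>
    (\<forall>T a w. grad_flow \<sigma> \<rho> f m T a w \<and> (\<forall>k\<in>{1..m}. a 0 k = fst \<theta>0 k \<and> w 0 k = snd \<theta>0 k)
       \<longrightarrow> (\<forall>t i. 0 \<le> t \<and> t < T \<and> ereal t \<le> min (ereal (Tp \<alpha> m)) (T1 \<alpha> m j0 T a w) \<and> i \<noteq> j0 \<longrightarrow>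
             sqrt (\<Sum>k=1..m. (w t k i)^2)
               \<le> C * max (1 / real m powr ((2*\<alpha> - 1)/2)) ((ln (real m))^5 / real m powr (5/2))))"

section \<open>The risk along the gradient flow\<close>

locale data_setting = activation +
  fixes \<rho> f :: "real^'n::finite \<Rightarrow> real" and j0 :: 'n
  assumes rho_meas: "\<rho> \<in> borel_measurable lborel"
    and rho_nonneg: "\<And>x. \<rho> x \<ge> 0"
    and rho_int: "integrable lborel \<rho>"
    and rho_prob: "(\<integral>x. \<rho> x \<partial>lborel) = 1"
    and rho_supp: "compact (closure {x. \<rho> x \<noteq> 0})"
    and rho_var: "\<And>i. (\<integral>x. (x $ i)\<^sup>2 * \<rho> x \<partial>lborel) = 1"
    and rho_cov: "\<And>i j. i \<noteq> j \<Longrightarrow> (\<integral>x. x $ i * x $ j * \<rho> x \<partial>lborel) = 0"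
    and f_meas: "f \<in> borel_measurable lborel"
    and f_bdd: "bounded (f ` closure {x. \<rho> x \<noteq> 0})"
    and f_corr: "\<And>i. (\<integral>x. f x * x $ i * \<rho> x \<partial>lborel) = (if i = j0 then 1 else 0)"
begin

definition grad_w :: "nat \<Rightarrow> (nat \<Rightarrow> real) \<Rightarrow> (nat \<Rightarrow> 'n \<Rightarrow> real) \<Rightarrow> nat \<Rightarrow> 'n \<Rightarrow> real" where
  "grad_w m a w k i = (\<integral>x. (net \<sigma> m a w x - f x) * (a k * \<sigma>1 (dotp (w k) x) * x $ i) * \<rho> x \<partial>lborel)"

definition act_defect :: "('n \<Rightarrow> real) \<Rightarrow> 'n \<Rightarrow> real" where
  "act_defect v i = (\<integral>x. (\<sigma> (dotp v x) - dotp v x) * x $ i * \<rho> x \<partial>lborel)"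

definition slope_defect :: "nat \<Rightarrow> (nat \<Rightarrow> real) \<Rightarrow> (nat \<Rightarrow> 'n \<Rightarrow> real) \<Rightarrow> nat \<Rightarrow> 'n \<Rightarrow> real" where
  "slope_defect m a w k i = (\<integral>x. (net \<sigma> m a w x - f x) * ((\<sigma>1 (dotp (w k) x) - 1) * x $ i) * \<rho> x \<partial>lborel)"

lemma f_measurable [measurable]: "f \<in> borel_measurable borel"
  using f_meas by simp

lemma rho_measurable [measurable]: "\<rho> \<in> borel_measurable borel"
  using rho_meas by simp

lemma support_bounds:
  obtains R F where "R > 0" "F \<ge> 0" "\<And>x j. \<rho> x \<noteq> 0 \<Longrightarrow> \<bar>x $ j\<bar> \<le> R" "\<And>x. \<rho> x \<noteq> 0 \<Longrightarrow> \<bar>f x\<bar> \<le> F"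
proof -
  obtain R where R: "\<forall>x\<in>closure {x. \<rho> x \<noteq> 0}. norm x \<le> R"
    using compact_imp_bounded[OF rho_supp] bounded_iff by metis
  obtain F where F: "\<forall>y\<in>f ` closure {x. \<rho> x \<noteq> 0}. norm y \<le> F"
    using f_bdd bounded_iff by metis
  have supp: "x \<in> closure {x. \<rho> x \<noteq> 0}" if "\<rho> x \<noteq> 0" for x
    using that by (meson closure_subset mem_Collect_eq subsetD)
  show ?thesis
  proof (rule that[of "max R 1" "max F 0"])
    show "\<bar>x $ j\<bar> \<le> max R 1" if "\<rho> x \<noteq> 0" for x j
      using R supp[OF that] component_le_norm_cart[of x j] by fastforce
    show "\<bar>f x\<bar> \<le> max F 0" if "\<rho> x \<noteq> 0" for x
      using F supp[OF that] by fastforce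
  qed auto
qed

lemma continuous_bounded_on_support:
  fixes h :: "real^'n \<Rightarrow> real"
  assumes "continuous_on UNIV h"
  obtains B where "\<And>x. \<rho> x \<noteq> 0 \<Longrightarrow> \<bar>h x\<bar> \<le> B"
proof -
  have "compact (h ` closure {x. \<rho> x \<noteq> 0})"
    by (rule compact_continuous_image) (use assms rho_supp continuous_on_subset in auto)
  then obtain B where B: "\<forall>y\<in>h ` closure {x. \<rho> x \<noteq> 0}. norm y \<le> B"
    using compact_imp_bounded bounded_iff by blast
  show ?thesis
  proof (rule that)
    fix x assume "\<rho> x \<noteq> 0"
    then have "x \<in> closure {x. \<rho> x \<noteq> 0}" by (meson closure_subset mem_Collect_eq subsetD)
    then have "norm (h x) \<le> B" using B by blast
    then show "\<bar>h x\<bar> \<le> B" by simp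
  qed
qed

lemma integrable_density_mult:
  assumes "h \<in> borel_measurable borel" and "\<And>x. \<rho> x \<noteq> 0 \<Longrightarrow> \<bar>h x\<bar> \<le> B"
  shows "integrable lborel (\<lambda>x. h x * \<rho> x)"
proof (rule Bochner_Integration.integrable_bound[of _ "\<lambda>x. \<bar>B\<bar> * \<rho> x"])
  show "integrable lborel (\<lambda>x. \<bar>B\<bar> * \<rho> x)" using rho_int by simp
  show "(\<lambda>x. h x * \<rho> x) \<in> borel_measurable lborel" using assms(1) by measurable
  show "AE x in lborel. norm (h x * \<rho> x) \<le> norm (\<bar>B\<bar> * \<rho> x)"
  proof (rule AE_I2)
    fix x show "norm (h x * \<rho> x) \<le> norm (\<bar>B\<bar> * \<rho> x)"
      using assms(2)[of x] rho_nonneg[of x] by (cases "\<rho> x = 0") (auto simp: abs_mult intro: mult_right_mono)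
  qed
qed

lemma abs_integral_density_le:
  assumes "h \<in> borel_measurable borel" and bound: "\<And>x. \<rho> x \<noteq> 0 \<Longrightarrow> \<bar>h x\<bar> \<le> B"
  shows "\<bar>\<integral>x. h x * \<rho> x \<partial>lborel\<bar> \<le> B"
proof -
  have "\<exists>x. \<rho> x \<noteq> 0"
  proof (rule ccontr)
    assume "\<nexists>x. \<rho> x \<noteq> 0"
    then have "\<rho> = (\<lambda>x. 0)" by auto
    with rho_prob show False by simp
  qed
  then have B: "B \<ge> 0" using bound by (meson abs_ge_zero order.trans)
  have "\<bar>\<integral>x. h x * \<rho> x \<partial>lborel\<bar> \<le> (\<integral>x. \<bar>h x * \<rho> x\<bar> \<partial>lborel)"
    by (rule integral_abs_bound)
  also have "\<dots> \<le> (\<integral>x. B * \<rho> x \<partial>lborel)"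
  proof (rule integral_mono)
    show "integrable lborel (\<lambda>x. \<bar>h x * \<rho> x\<bar>)"
      using integrable_density_mult[OF assms] by simp
    show "integrable lborel (\<lambda>x. B * \<rho> x)" using rho_int by simp
    show "\<bar>h x * \<rho> x\<bar> \<le> B * \<rho> x" for x
      using bound[of x] rho_nonneg[of x] by (cases "\<rho> x = 0") (auto simp: abs_mult intro: mult_right_mono)
  qed
  also have "\<dots> = B" using rho_prob by simp
  finally show ?thesis .
qed

lemma integrable_continuous_density:
  fixes h :: "real^'n \<Rightarrow> real"
  assumes "continuous_on UNIV h"
  shows "integrable lborel (\<lambda>x. h x * \<rho> x)" "integrable lborel (\<lambda>x. f x * h x * \<rho> x)"
proof -
  obtain B where B: "\<And>x. \<rho> x \<noteq> 0 \<Longrightarrow> \<bar>h x\<bar> \<le> B" using continuous_bounded_on_support[OF assms] by blast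
  obtain R F where F: "F \<ge> 0" "\<And>x. \<rho> x \<noteq> 0 \<Longrightarrow> \<bar>f x\<bar> \<le> F" using support_bounds by metis
  have h [measurable]: "h \<in> borel_measurable borel" using assms by (rule borel_measurable_continuous_onI)
  show "integrable lborel (\<lambda>x. h x * \<rho> x)" by (rule integrable_density_mult[OF h B])
  have fh: "(\<lambda>x. f x * h x) \<in> borel_measurable borel" by measurable
  have "\<bar>f x * h x\<bar> \<le> F * B" if "\<rho> x \<noteq> 0" for x
    unfolding abs_mult using F B[OF that] that by (intro mult_mono) (auto intro: order.trans[OF abs_ge_zero])
  then show "integrable lborel (\<lambda>x. f x * h x * \<rho> x)"
    using integrable_density_mult[OF fh] by blast
qed

lemma integral_dotp_coordinate: "(\<integral>x. dotp v x * x $ i * \<rho> x \<partial>lborel) = v i"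
proof -
  have int: "integrable lborel (\<lambda>x. x $ j * x $ i * \<rho> x)" for j
    by (rule integrable_continuous_density) (intro continuous_intros)
  have "(\<integral>x. dotp v x * x $ i * \<rho> x \<partial>lborel) = (\<integral>x. (\<Sum>j\<in>UNIV. v j * (x $ j * x $ i * \<rho> x)) \<partial>lborel)"
    unfolding dotp_def by (simp add: sum_distrib_right mult.assoc)
  also have "\<dots> = (\<Sum>j\<in>UNIV. v j * (\<integral>x. x $ j * x $ i * \<rho> x \<partial>lborel))"
    using int by simp
  also have "\<dots> = (\<Sum>j\<in>UNIV. v j * (if j = i then 1 else 0))"
    by (intro sum.cong refl) (use rho_var rho_cov in \<open>auto simp: power2_eq_square\<close>)
  finally show ?thesis by (simp add: if_distrib cong: if_cong)
qed

lemma integrable_residual_density: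
  fixes g h :: "real^'n \<Rightarrow> real"
  assumes "continuous_on UNIV g" "continuous_on UNIV h"
  shows "integrable lborel (\<lambda>x. (g x - f x) * h x * \<rho> x)"
proof -
  have "integrable lborel (\<lambda>x. g x * h x * \<rho> x - f x * h x * \<rho> x)"
    using assms by (intro Bochner_Integration.integrable_diff integrable_continuous_density continuous_intros)
  moreover have "(\<lambda>x. g x * h x * \<rho> x - f x * h x * \<rho> x) = (\<lambda>x. (g x - f x) * h x * \<rho> x)"
    by (simp add: fun_eq_iff algebra_simps)
  ultimately show ?thesis by simp
qed

lemma has_real_derivative_integral_density:
  assumes meas: "\<And>u. \<phi> u \<in> borel_measurable borel" "\<phi>' \<in> borel_measurable borel"
    and bounded: "\<And>x h. \<rho> x \<noteq> 0 \<Longrightarrow> \<bar>h\<bar> \<le> 1 \<Longrightarrow> \<bar>\<phi> (u0 + h) x\<bar> \<le> B"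
    and remainder: "\<And>x h. \<rho> x \<noteq> 0 \<Longrightarrow> \<bar>h\<bar> \<le> 1 \<Longrightarrow> \<bar>\<phi> (u0 + h) x - \<phi> u0 x - h * \<phi>' x\<bar> \<le> K * h\<^sup>2"
  shows "((\<lambda>u. \<integral>x. \<phi> u x * \<rho> x \<partial>lborel) has_real_derivative (\<integral>x. \<phi>' x * \<rho> x \<partial>lborel)) (at u0)"
proof (rule has_real_derivative_of_quadratic_remainder)
  fix h :: real assume h: "\<bar>h\<bar> \<le> 1"
  have "\<bar>\<phi>' x\<bar> \<le> 2 * B + K" if "\<rho> x \<noteq> 0" for x
    using remainder[OF that, of 1] bounded[OF that, of 1] bounded[OF that, of 0]
    unfolding abs_le_iff by simp
  then have int': "integrable lborel (\<lambda>x. \<phi>' x * \<rho> x)"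
    by (rule integrable_density_mult[OF meas(2)])
  have int: "integrable lborel (\<lambda>x. \<phi> (u0 + h) x * \<rho> x)" "integrable lborel (\<lambda>x. \<phi> u0 x * \<rho> x)"
    using bounded[of _ h] bounded[of _ 0] h by (auto intro: integrable_density_mult[OF meas(1)])
  have "(\<integral>x. \<phi> (u0 + h) x * \<rho> x \<partial>lborel) - (\<integral>x. \<phi> u0 x * \<rho> x \<partial>lborel) - h * (\<integral>x. \<phi>' x * \<rho> x \<partial>lborel)
      = (\<integral>x. \<phi> (u0 + h) x * \<rho> x - \<phi> u0 x * \<rho> x - h * (\<phi>' x * \<rho> x) \<partial>lborel)"
    using int int' by simp
  also have "\<dots> = (\<integral>x. (\<phi> (u0 + h) x - \<phi> u0 x - h * \<phi>' x) * \<rho> x \<partial>lborel)"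
    by (simp add: algebra_simps)
  also have "\<bar>\<dots>\<bar> \<le> K * h\<^sup>2"
    by (rule abs_integral_density_le) (use meas remainder h in auto)
  finally show "\<bar>(\<integral>x. \<phi> (u0 + h) x * \<rho> x \<partial>lborel) - (\<integral>x. \<phi> u0 x * \<rho> x \<partial>lborel) - h * (\<integral>x. \<phi>' x * \<rho> x \<partial>lborel)\<bar>
      \<le> K * h\<^sup>2" .
qed

lemma dotp_shift_bounded_on_support:
  fixes w :: "nat \<Rightarrow> 'n \<Rightarrow> real"
  obtains Y where "\<And>x l y. \<rho> x \<noteq> 0 \<Longrightarrow> l \<in> {1..m} \<Longrightarrow> \<bar>y\<bar> \<le> 1 \<Longrightarrow> \<bar>dotp (w l) x + y * x $ i\<bar> \<le> Y"
proof -
  obtain R F where R: "R > 0" "\<And>x j. \<rho> x \<noteq> 0 \<Longrightarrow> \<bar>x $ j\<bar> \<le> R"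
    using support_bounds by metis
  define q where "q = (\<Sum>l=1..m. \<Sum>j\<in>UNIV. \<bar>w l j\<bar>)"
  have wq: "\<bar>w l j\<bar> \<le> q" if "l \<in> {1..m}" for l j
  proof -
    have "\<bar>w l j\<bar> \<le> (\<Sum>j\<in>UNIV. \<bar>w l j\<bar>)" by (rule member_le_sum) auto
    also have "\<dots> \<le> q" unfolding q_def by (rule member_le_sum) (use that in \<open>auto intro: sum_nonneg\<close>)
    finally show ?thesis .
  qed
  show ?thesis
  proof (rule that[of "real CARD('n) * q * R + R"])
    fix x l and y :: real assume x: "\<rho> x \<noteq> 0" and l: "l \<in> {1..m}" and y: "\<bar>y\<bar> \<le> 1"
    have "\<bar>dotp (w l) x\<bar> \<le> real CARD('n) * q * R"
      by (rule abs_dotp_le) (use wq[OF l] R(2)[OF x] in auto)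
    moreover have "\<bar>y * x $ i\<bar> \<le> 1 * R"
      unfolding abs_mult by (intro mult_mono) (use y R(2)[OF x] in auto)
    ultimately show "\<bar>dotp (w l) x + y * x $ i\<bar> \<le> real CARD('n) * q * R + R"
      using abs_triangle_ineq[of "dotp (w l) x" "y * x $ i"] by linarith
  qed
qed

lemma perturbed_residual_bounds:
  assumes k: "k \<in> {1..m}"
  obtains Q K where
    "\<And>x h. \<rho> x \<noteq> 0 \<Longrightarrow> \<bar>h\<bar> \<le> 1 \<Longrightarrow> \<bar>net \<sigma> m a (w(k := (w k)(i := w k i + h))) x - f x\<bar> \<le> Q"
    "\<And>x h. \<rho> x \<noteq> 0 \<Longrightarrow> \<bar>h\<bar> \<le> 1 \<Longrightarrow>
       \<bar>(net \<sigma> m a (w(k := (w k)(i := w k i + h))) x - f x)\<^sup>2 - (net \<sigma> m a w x - f x)\<^sup>2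
         - h * (2 * (net \<sigma> m a w x - f x) * (a k * \<sigma>1 (dotp (w k) x) * x $ i))\<bar> \<le> K * h\<^sup>2"
proof -
  obtain R F where R: "R > 0" "\<And>x j. \<rho> x \<noteq> 0 \<Longrightarrow> \<bar>x $ j\<bar> \<le> R" and F: "\<And>x. \<rho> x \<noteq> 0 \<Longrightarrow> \<bar>f x\<bar> \<le> F"
    using support_bounds by metis
  obtain Y where Y: "\<And>x l y. \<rho> x \<noteq> 0 \<Longrightarrow> l \<in> {1..m} \<Longrightarrow> \<bar>y\<bar> \<le> 1 \<Longrightarrow> \<bar>dotp (w l) x + y * x $ i\<bar> \<le> Y"
    using dotp_shift_bounded_on_support by metis
  obtain B0 B1 B2 where B0: "\<And>u. \<bar>u\<bar> \<le> Y \<Longrightarrow> \<bar>\<sigma> u\<bar> \<le> B0"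
    and B1: "\<And>u. \<bar>u\<bar> \<le> Y \<Longrightarrow> \<bar>\<sigma>1 u\<bar> \<le> B1" and B2: "\<And>u. \<bar>u\<bar> \<le> Y \<Longrightarrow> \<bar>\<sigma>2 u\<bar> \<le> B2"
    using continuous_abs_bounded_on_interval[OF continuous_sigma(1)]
      continuous_abs_bounded_on_interval[OF continuous_sigma(2)]
      continuous_abs_bounded_on_interval[OF continuous_sigma(3)] by metis
  define r where "r x = net \<sigma> m a w x - a k * \<sigma> (dotp (w k) x) - f x" for x
  define Q where "Q = (\<Sum>l=1..m. \<bar>a l\<bar>) * B0 + 2 * \<bar>a k\<bar> * B0 + F"
  have shift: "net \<sigma> m a (w(k := (w k)(i := w k i + h))) x - f x = r x + a k * \<sigma> (dotp (w k) x + h * x $ i)"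
    for x h by (simp add: r_def net_update[OF k] dotp_update)
  have Q: "\<bar>r x + a k * \<sigma> (dotp (w k) x + y * x $ i)\<bar> \<le> Q" if x: "\<rho> x \<noteq> 0" and y: "\<bar>y\<bar> \<le> 1" for x y
  proof -
    have net: "\<bar>net \<sigma> m a w x\<bar> \<le> (\<Sum>l=1..m. \<bar>a l\<bar>) * B0"
      by (rule abs_net_le) (use B0 Y[of x _ 0] x in auto)
    have ak: "\<bar>a k * \<sigma> (dotp (w k) x + y' * x $ i)\<bar> \<le> \<bar>a k\<bar> * B0" if "\<bar>y'\<bar> \<le> 1" for y'
      unfolding abs_mult by (intro mult_left_mono B0 Y[OF x k that]) simp
    have ak0: "\<bar>a k * \<sigma> (dotp (w k) x)\<bar> \<le> \<bar>a k\<bar> * B0"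
      using ak[of 0] by simp
    show ?thesis
      using net ak0 ak[OF y] F[OF x] unfolding r_def Q_def abs_le_iff by (intro conjI; linarith)
  qed
  show ?thesis
  proof (rule that)
    show "\<bar>net \<sigma> m a (w(k := (w k)(i := w k i + h))) x - f x\<bar> \<le> Q" if "\<rho> x \<noteq> 0" "\<bar>h\<bar> \<le> 1" for x h
      using Q[OF that] by (simp add: shift)
    show "\<bar>(net \<sigma> m a (w(k := (w k)(i := w k i + h))) x - f x)\<^sup>2 - (net \<sigma> m a w x - f x)\<^sup>2
         - h * (2 * (net \<sigma> m a w x - f x) * (a k * \<sigma>1 (dotp (w k) x) * x $ i))\<bar>
         \<le> (2 * (\<bar>a k\<bar> * B1 * R)\<^sup>2 + 2 * Q * (\<bar>a k\<bar> * B2 * R\<^sup>2)) * h\<^sup>2" if x: "\<rho> x \<noteq> 0" and h: "\<bar>h\<bar> \<le> 1" for x h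
      using square_shift_remainder_le[OF Y[OF x k] B1 B2 Q[OF x] R(2)[OF x] h] shift[where h = 0]
      by (simp add: shift r_def)
  qed
qed

lemma risk_has_derivative_w:
  assumes k: "k \<in> {1..m}"
  shows "((\<lambda>u. risk \<sigma> \<rho> f m a (w(k := (w k)(i := u)))) has_real_derivative grad_w m a w k i) (at (w k i))"
proof -
  obtain Q K where Q: "\<And>x h. \<rho> x \<noteq> 0 \<Longrightarrow> \<bar>h\<bar> \<le> 1 \<Longrightarrow> \<bar>net \<sigma> m a (w(k := (w k)(i := w k i + h))) x - f x\<bar> \<le> Q"
    and remainder: "\<And>x h. \<rho> x \<noteq> 0 \<Longrightarrow> \<bar>h\<bar> \<le> 1 \<Longrightarrow>
       \<bar>(net \<sigma> m a (w(k := (w k)(i := w k i + h))) x - f x)\<^sup>2 - (net \<sigma> m a w x - f x)\<^sup>2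
         - h * (2 * (net \<sigma> m a w x - f x) * (a k * \<sigma>1 (dotp (w k) x) * x $ i))\<bar> \<le> K * h\<^sup>2"
    using perturbed_residual_bounds[OF k] by metis
  have "((\<lambda>u. \<integral>x. (net \<sigma> m a (w(k := (w k)(i := u))) x - f x)\<^sup>2 * \<rho> x \<partial>lborel) has_real_derivative
        (\<integral>x. (2 * (net \<sigma> m a w x - f x) * (a k * \<sigma>1 (dotp (w k) x) * x $ i)) * \<rho> x \<partial>lborel)) (at (w k i))"
  proof (rule has_real_derivative_integral_density[where B = "Q\<^sup>2" and K = K])
    show "(\<lambda>x. (net \<sigma> m a (w(k := (w k)(i := u))) x - f x)\<^sup>2) \<in> borel_measurable borel" for u
      by measurable
    show "(\<lambda>x. 2 * (net \<sigma> m a w x - f x) * (a k * \<sigma>1 (dotp (w k) x) * x $ i)) \<in> borel_measurable borel"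
      by measurable
    show "\<bar>(net \<sigma> m a (w(k := (w k)(i := w k i + h))) x - f x)\<^sup>2\<bar> \<le> Q\<^sup>2" if "\<rho> x \<noteq> 0" "\<bar>h\<bar> \<le> 1" for x h
      using power_mono[OF Q[OF that] abs_ge_zero, of 2] by simp
    show "\<bar>(net \<sigma> m a (w(k := (w k)(i := w k i + h))) x - f x)\<^sup>2 - (net \<sigma> m a (w(k := (w k)(i := w k i))) x - f x)\<^sup>2
         - h * (2 * (net \<sigma> m a w x - f x) * (a k * \<sigma>1 (dotp (w k) x) * x $ i))\<bar> \<le> K * h\<^sup>2"
      if "\<rho> x \<noteq> 0" "\<bar>h\<bar> \<le> 1" for x h
      using remainder[OF that] by simp
  qed
  then have deriv: "((\<lambda>u. 1/2 * \<integral>x. (net \<sigma> m a (w(k := (w k)(i := u))) x - f x)\<^sup>2 * \<rho> x \<partial>lborel) has_real_derivative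
        1/2 * (\<integral>x. (2 * (net \<sigma> m a w x - f x) * (a k * \<sigma>1 (dotp (w k) x) * x $ i)) * \<rho> x \<partial>lborel)) (at (w k i))"
    by (rule DERIV_cmult)
  have grad_eq: "1/2 * (\<integral>x. (2 * (net \<sigma> m a w x - f x) * (a k * \<sigma>1 (dotp (w k) x) * x $ i)) * \<rho> x \<partial>lborel)
      = grad_w m a w k i"
    unfolding grad_w_def by (simp only: mult.assoc integral_mult_right_zero)
  from deriv[unfolded grad_eq] show ?thesis
    unfolding risk_def .
qed

lemma integral_net_coordinate:
  "(\<integral>x. net \<sigma> m a w x * x $ i * \<rho> x \<partial>lborel) = (\<Sum>l=1..m. a l * (w l i + act_defect (w l) i))"
proof -
  have int: "integrable lborel (\<lambda>x. dotp (w l) x * x $ i * \<rho> x)"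
    "integrable lborel (\<lambda>x. (\<sigma> (dotp (w l) x) - dotp (w l) x) * x $ i * \<rho> x)" for l
    by (intro integrable_continuous_density continuous_intros)+
  have "net \<sigma> m a w x * x $ i * \<rho> x = (\<Sum>l=1..m. a l * \<sigma> (dotp (w l) x) * x $ i * \<rho> x)" for x
    unfolding net_def by (simp add: sum_distrib_right)
  also have "\<dots> x = (\<Sum>l=1..m. a l * (dotp (w l) x * x $ i * \<rho> x + (\<sigma> (dotp (w l) x) - dotp (w l) x) * x $ i * \<rho> x))" for x
    by (rule sum.cong) (simp_all add: algebra_simps)
  finally have "(\<integral>x. net \<sigma> m a w x * x $ i * \<rho> x \<partial>lborel)
      = (\<integral>x. (\<Sum>l=1..m. a l * (dotp (w l) x * x $ i * \<rho> x + (\<sigma> (dotp (w l) x) - dotp (w l) x) * x $ i * \<rho> x)) \<partial>lborel)"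
    by simp
  also have "\<dots> = (\<Sum>l=1..m. a l * ((\<integral>x. dotp (w l) x * x $ i * \<rho> x \<partial>lborel) + act_defect (w l) i))"
    unfolding act_defect_def using int by (subst Bochner_Integration.integral_sum) auto
  finally show ?thesis by (simp add: integral_dotp_coordinate)
qed

lemma grad_w_decomposition:
  assumes i: "i \<noteq> j0"
  shows "grad_w m a w k i
    = a k * ((\<Sum>l=1..m. a l * w l i) + ((\<Sum>l=1..m. a l * act_defect (w l) i) + slope_defect m a w k i))"
proof -
  have int: "integrable lborel (\<lambda>x. net \<sigma> m a w x * x $ i * \<rho> x)"
    "integrable lborel (\<lambda>x. f x * x $ i * \<rho> x)"
    "integrable lborel (\<lambda>x. (net \<sigma> m a w x - f x) * ((\<sigma>1 (dotp (w k) x) - 1) * x $ i) * \<rho> x)"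
    by (intro integrable_continuous_density integrable_residual_density continuous_intros)+
  have "grad_w m a w k i = (\<integral>x. a k * ((net \<sigma> m a w x * x $ i * \<rho> x - f x * x $ i * \<rho> x)
      + (net \<sigma> m a w x - f x) * ((\<sigma>1 (dotp (w k) x) - 1) * x $ i) * \<rho> x) \<partial>lborel)"
    unfolding grad_w_def by (intro Bochner_Integration.integral_cong) (simp_all add: algebra_simps)
  also have "\<dots> = a k * ((\<integral>x. net \<sigma> m a w x * x $ i * \<rho> x \<partial>lborel) - (\<integral>x. f x * x $ i * \<rho> x \<partial>lborel)
      + slope_defect m a w k i)"
    unfolding slope_defect_def using int by simp
  also have "\<dots> = a k * ((\<Sum>l=1..m. a l * (w l i + act_defect (w l) i)) - 0 + slope_defect m a w k i)"
    using f_corr[of i] i by (simp only: integral_net_coordinate) simp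
  finally show ?thesis by (simp add: algebra_simps sum.distrib)
qed

lemma abs_act_defect_le:
  assumes "\<And>x. \<rho> x \<noteq> 0 \<Longrightarrow> \<bar>dotp v x\<bar> \<le> Z" and "\<And>x. \<rho> x \<noteq> 0 \<Longrightarrow> \<bar>x $ i\<bar> \<le> R"
  shows "\<bar>act_defect v i\<bar> \<le> CL * Z^3 * R"
  unfolding act_defect_def
proof (rule abs_integral_density_le)
  show "(\<lambda>x. (\<sigma> (dotp v x) - dotp v x) * x $ i) \<in> borel_measurable borel"
    by measurable
  show "\<bar>(\<sigma> (dotp v x) - dotp v x) * x $ i\<bar> \<le> CL * Z^3 * R" if "\<rho> x \<noteq> 0" for x
    unfolding abs_mult using abs_sigma_sub_le[OF assms(1)[OF that]] assms[OF that] CL_nonneg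
    by (intro mult_mono) (auto intro: order.trans[OF abs_ge_zero])
qed

lemma abs_slope_defect_le:
  assumes "\<And>x. \<rho> x \<noteq> 0 \<Longrightarrow> \<bar>net \<sigma> m a w x - f x\<bar> \<le> N"
    and "\<And>x. \<rho> x \<noteq> 0 \<Longrightarrow> \<bar>dotp (w k) x\<bar> \<le> Z" and "\<And>x. \<rho> x \<noteq> 0 \<Longrightarrow> \<bar>x $ i\<bar> \<le> R"
  shows "\<bar>slope_defect m a w k i\<bar> \<le> N * (CL * Z\<^sup>2 * R)"
  unfolding slope_defect_def
proof (rule abs_integral_density_le)
  show "(\<lambda>x. (net \<sigma> m a w x - f x) * ((\<sigma>1 (dotp (w k) x) - 1) * x $ i)) \<in> borel_measurable borel"
    by measurable
  show "\<bar>(net \<sigma> m a w x - f x) * ((\<sigma>1 (dotp (w k) x) - 1) * x $ i)\<bar> \<le> N * (CL * Z\<^sup>2 * R)" if "\<rho> x \<noteq> 0" for x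
    unfolding abs_mult using abs_sigma1_sub_one_le[OF assms(2)[OF that]] assms[OF that] CL_nonneg
    by (intro mult_mono) (auto intro: order.trans[OF abs_ge_zero])
qed

lemma abs_defect_sum_le:
  fixes w :: "nat \<Rightarrow> 'n \<Rightarrow> real"
  assumes m: "1 \<le> m" and q: "0 \<le> q" "real m * q\<^sup>2 \<le> 1"
    and aw: "\<And>l j. l \<in> {1..m} \<Longrightarrow> \<bar>a l\<bar> \<le> q \<and> \<bar>w l j\<bar> \<le> q"
    and R: "0 \<le> R" "\<And>x j. \<rho> x \<noteq> 0 \<Longrightarrow> \<bar>x $ j\<bar> \<le> R" and F: "\<And>x. \<rho> x \<noteq> 0 \<Longrightarrow> \<bar>f x\<bar> \<le> F"
    and k: "k \<in> {1..m}"
  shows "\<bar>(\<Sum>l=1..m. a l * act_defect (w l) i) + slope_defect m a w k i\<bar>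
    \<le> (CL * real CARD('n)^3 * R^4 + (real CARD('n) * R + CL * real CARD('n)^3 * R^3 + F)
        * (CL * (real CARD('n))\<^sup>2 * R^3)) * q\<^sup>2"
proof -
  define Z where "Z = real CARD('n) * q * R"
  have Z: "\<bar>dotp (w l) x\<bar> \<le> Z" if "\<rho> x \<noteq> 0" "l \<in> {1..m}" for x l
    unfolding Z_def by (rule abs_dotp_le) (use aw[OF that(2)] R(2)[OF that(1)] in auto)
  have residual: "\<bar>net \<sigma> m a w x - f x\<bar> \<le> real m * q * (Z + CL * Z^3) + F" if "\<rho> x \<noteq> 0" for x
    using abs_net_le_small[of m a q w x Z] aw Z[OF that] F[OF that] by fastforce
  have "\<bar>\<Sum>l=1..m. a l * act_defect (w l) i\<bar> \<le> (\<Sum>l=1..m. q * (CL * Z^3 * R))"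
  proof (rule order.trans[OF sum_abs sum_mono])
    fix l assume l: "l \<in> {1..m}"
    have "\<bar>act_defect (w l) i\<bar> \<le> CL * Z^3 * R"
      by (rule abs_act_defect_le) (use Z l R in auto)
    then show "\<bar>a l * act_defect (w l) i\<bar> \<le> q * (CL * Z^3 * R)"
      unfolding abs_mult using aw[OF l] q by (intro mult_mono) auto
  qed
  moreover have "\<bar>slope_defect m a w k i\<bar> \<le> (real m * q * (Z + CL * Z^3) + F) * (CL * Z\<^sup>2 * R)"
    by (rule abs_slope_defect_le) (use residual Z k R in auto)
  moreover have "real m * q * (CL * Z^3 * R) + (real m * q * (Z + CL * Z^3) + F) * (CL * Z\<^sup>2 * R)
    \<le> (CL * real CARD('n)^3 * R^4 + (real CARD('n) * R + CL * real CARD('n)^3 * R^3 + F)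
        * (CL * (real CARD('n))\<^sup>2 * R^3)) * q\<^sup>2"
    unfolding Z_def by (rule defect_constant_le) (use CL_nonneg R q m in auto)
  ultimately show ?thesis by simp
qed

lemma grad_w_alignment:
  obtains K where "K \<ge> 0"
    and "\<And>m a (w :: nat \<Rightarrow> 'n \<Rightarrow> real) q i. i \<noteq> j0 \<Longrightarrow> 1 \<le> m \<Longrightarrow> 0 \<le> q \<Longrightarrow> real m * q\<^sup>2 \<le> 1 \<Longrightarrow>
           (\<And>l j. l \<in> {1..m} \<Longrightarrow> \<bar>a l\<bar> \<le> q \<and> \<bar>w l j\<bar> \<le> q) \<Longrightarrow>
           -(K * q^3 * sqrt (real m) * sqrt (\<Sum>k=1..m. (w k i)\<^sup>2)) \<le> (\<Sum>k=1..m. w k i * grad_w m a w k i)"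
proof -
  obtain R F where R: "R > 0" "\<And>x j. \<rho> x \<noteq> 0 \<Longrightarrow> \<bar>x $ j\<bar> \<le> R" and F: "F \<ge> 0" "\<And>x. \<rho> x \<noteq> 0 \<Longrightarrow> \<bar>f x\<bar> \<le> F"
    using support_bounds by metis
  define K where "K = CL * real CARD('n)^3 * R^4 + (real CARD('n) * R + CL * real CARD('n)^3 * R^3 + F)
        * (CL * (real CARD('n))\<^sup>2 * R^3)"
  show ?thesis
  proof (rule that)
    show K: "K \<ge> 0" unfolding K_def using CL_nonneg R F by simp
    fix m a q i and w :: "nat \<Rightarrow> 'n \<Rightarrow> real"
    assume i: "i \<noteq> j0" and m: "1 \<le> m" and q: "0 \<le> q" "real m * q\<^sup>2 \<le> 1"
      and aw: "\<And>l j. l \<in> {1..m} \<Longrightarrow> \<bar>a l\<bar> \<le> q \<and> \<bar>w l j\<bar> \<le> q"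
    let ?W = "L2_set (\<lambda>k. w k i) {1..m}"
    have "-(K * q\<^sup>2 * L2_set a {1..m} * ?W)
        \<le> (\<Sum>k=1..m. w k i * (a k * ((\<Sum>l=1..m. a l * w l i) + ((\<Sum>l=1..m. a l * act_defect (w l) i) + slope_defect m a w k i))))"
      by (rule sum_rank_one_plus_error_ge) (use abs_defect_sum_le[OF m q aw _ R(2) F(2)] R in \<open>simp add: K_def\<close>)
    also have "\<dots> = (\<Sum>k=1..m. w k i * grad_w m a w k i)"
      by (simp add: grad_w_decomposition[OF i])
    finally have align: "-(K * q\<^sup>2 * L2_set a {1..m} * ?W) \<le> (\<Sum>k=1..m. w k i * grad_w m a w k i)" .
    have "L2_set a {1..m} \<le> sqrt (real m) * q"
      using L2_set_le_sqrt_card_mult[of "{1..m}" a q] aw by simp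
    then have "K * q\<^sup>2 * L2_set a {1..m} * ?W \<le> K * q\<^sup>2 * (sqrt (real m) * q) * ?W"
      using K by (intro mult_right_mono mult_left_mono) (auto simp: L2_set_def intro: sum_nonneg)
    with align show "-(K * q^3 * sqrt (real m) * sqrt (\<Sum>k=1..m. (w k i)\<^sup>2)) \<le> (\<Sum>k=1..m. w k i * grad_w m a w k i)"
      by (simp add: L2_set_def power3_eq_cube power2_eq_square mult_ac)
  qed
qed

lemma grad_flow_has_derivative_w:
  assumes flow: "grad_flow \<sigma> \<rho> f m T a w" and s: "s \<in> {0..<T}" and k: "k \<in> {1..m}"
  shows "((\<lambda>s. w s k i) has_real_derivative - grad_w m (a s) (w s) k i) (at s within {0..<T})"
proof -
  have "((\<lambda>s. w s k i) has_real_derivative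
      - deriv (\<lambda>u. risk \<sigma> \<rho> f m (a s) ((w s)(k := (w s k)(i := u)))) (w s k i)) (at s within {0..<T})"
    using flow s k unfolding grad_flow_def by blast
  moreover have "deriv (\<lambda>u. risk \<sigma> \<rho> f m (a s) ((w s)(k := (w s k)(i := u)))) (w s k i) = grad_w m (a s) (w s) k i"
    by (rule DERIV_imp_deriv[OF risk_has_derivative_w[OF k]])
  ultimately show ?thesis by simp
qed

lemma inner_weight_growth:
  obtains K where "K \<ge> 0"
    and "\<And>m T a w i q t. grad_flow \<sigma> \<rho> f m T a w \<Longrightarrow> i \<noteq> j0 \<Longrightarrow> 1 \<le> m \<Longrightarrow> 0 \<le> q \<Longrightarrow> real m * q\<^sup>2 \<le> 1 \<Longrightarrow>
           0 \<le> t \<Longrightarrow> t < T \<Longrightarrow> (\<And>s. 0 \<le> s \<Longrightarrow> s < t \<Longrightarrow> qmax m (a s) (w s) < q) \<Longrightarrow>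
           sqrt (\<Sum>k=1..m. (w t k i)\<^sup>2) \<le> sqrt (\<Sum>k=1..m. (w 0 k i)\<^sup>2) + K * q^3 * sqrt (real m) * t"
proof -
  obtain K where K: "K \<ge> 0" and align: "\<And>m a (w :: nat \<Rightarrow> 'n \<Rightarrow> real) q i. i \<noteq> j0 \<Longrightarrow> 1 \<le> m \<Longrightarrow> 0 \<le> q \<Longrightarrow> real m * q\<^sup>2 \<le> 1 \<Longrightarrow>
           (\<And>l j. l \<in> {1..m} \<Longrightarrow> \<bar>a l\<bar> \<le> q \<and> \<bar>w l j\<bar> \<le> q) \<Longrightarrow>
           -(K * q^3 * sqrt (real m) * sqrt (\<Sum>k=1..m. (w k i)\<^sup>2)) \<le> (\<Sum>k=1..m. w k i * grad_w m a w k i)"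
    by (rule grad_w_alignment) blast
  show ?thesis
  proof (rule that[OF K])
    fix m T a w i q t
    assume flow: "grad_flow \<sigma> \<rho> f m T a w" and i: "i \<noteq> j0" and m: "1 \<le> m"
      and q: "0 \<le> q" "real m * q\<^sup>2 \<le> 1" and t: "0 \<le> t" "t < T"
      and below: "\<And>s. 0 \<le> s \<Longrightarrow> s < t \<Longrightarrow> qmax m (a s) (w s) < q"
    show "sqrt (\<Sum>k=1..m. (w t k i)\<^sup>2) \<le> sqrt (\<Sum>k=1..m. (w 0 k i)\<^sup>2) + K * q^3 * sqrt (real m) * t"
    proof (rule sqrt_sum_squares_growth[where W = "\<lambda>s k. w s k i" and W' = "\<lambda>s k. - grad_w m (a s) (w s) k i"])
      show "((\<lambda>s. w s k i) has_real_derivative - grad_w m (a s) (w s) k i) (at s within {0..t})"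
        if "s \<in> {0..t}" "k \<in> {1..m}" for s k
      proof -
        have "s \<in> {0..<T}" using that(1) t(2) by simp
        then have "((\<lambda>s. w s k i) has_real_derivative - grad_w m (a s) (w s) k i) (at s within {0..<T})"
          by (rule grad_flow_has_derivative_w[OF flow _ that(2)])
        then show ?thesis by (rule DERIV_subset) (use t(2) in auto)
      qed
      show "(\<Sum>k=1..m. w s k i * - grad_w m (a s) (w s) k i)
          \<le> K * q^3 * sqrt (real m) * sqrt (\<Sum>k=1..m. (w s k i)\<^sup>2)" if "0 < s" "s < t" for s
      proof -
        have lt: "qmax m (a s) (w s) < q" using below that by simp
        have "-(K * q^3 * sqrt (real m) * sqrt (\<Sum>k=1..m. (w s k i)\<^sup>2)) \<le> (\<Sum>k=1..m. w s k i * grad_w m (a s) (w s) k i)"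
        proof (rule align[OF i m q])
          show "\<bar>a s l\<bar> \<le> q \<and> \<bar>w s l j\<bar> \<le> q" if "l \<in> {1..m}" for l j
            using abs_le_qmax(1)[OF that, where a = "a s" and w = "w s"] abs_le_qmax(2)[OF that, where a = "a s" and w = "w s" and j = j] lt by (intro conjI; linarith)
        qed
        then show ?thesis by (simp add: sum_negf)
      qed
    qed (use K q t in auto)
  qed
qed

lemma inner_weight_bound_eventually:
  assumes \<alpha>: "\<alpha> > 1/2"
  obtains M K where "K \<ge> 0" and "\<And>m. M \<le> m \<Longrightarrow> 1 \<le> m"
    and "\<And>m T a w i t. M \<le> m \<Longrightarrow> grad_flow \<sigma> \<rho> f m T a w \<Longrightarrow> i \<noteq> j0 \<Longrightarrow> 0 \<le> t \<Longrightarrow> t < T \<Longrightarrow>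
           ereal t \<le> min (ereal (Tp \<alpha> m)) (T1 \<alpha> m j0 T a w) \<Longrightarrow>
           sqrt (\<Sum>k=1..m. (w t k i)\<^sup>2) \<le> sqrt (\<Sum>k=1..m. (w 0 k i)\<^sup>2)
             + K * \<alpha> * max (1 / real m powr ((2*\<alpha> - 1)/2)) ((ln (real m))^5 / real m powr (5/2))"
proof -
  obtain K where K: "K \<ge> 0" and growth: "\<And>m T a w i q t. grad_flow \<sigma> \<rho> f m T a w \<Longrightarrow> i \<noteq> j0 \<Longrightarrow> 1 \<le> m \<Longrightarrow>
      0 \<le> q \<Longrightarrow> real m * q\<^sup>2 \<le> 1 \<Longrightarrow> 0 \<le> t \<Longrightarrow> t < T \<Longrightarrow> (\<And>s. 0 \<le> s \<Longrightarrow> s < t \<Longrightarrow> qmax m (a s) (w s) < q) \<Longrightarrow>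
      sqrt (\<Sum>k=1..m. (w t k i)\<^sup>2) \<le> sqrt (\<Sum>k=1..m. (w 0 k i)\<^sup>2) + K * q^3 * sqrt (real m) * t"
    by (rule inner_weight_growth) blast
  obtain M where M: "\<And>m. m \<ge> M \<Longrightarrow> 1 \<le> real m \<and> real m * (qmax_threshold \<alpha> m)\<^sup>2 \<le> 1 \<and>
      Tp \<alpha> m * qmax_threshold \<alpha> m ^ 3 * sqrt (real m)
        \<le> \<alpha> * max (1 / real m powr ((2*\<alpha> - 1)/2)) (ln (real m) ^ 5 / real m powr (5/2))"
    using eventually_threshold_scaling[OF \<alpha>] unfolding eventually_sequentially by blast
  show ?thesis
  proof (rule that[OF K])
    show "1 \<le> m" if "M \<le> m" for m using M[OF that] by simp
    fix m T a w i t
    assume m: "M \<le> m" and flow: "grad_flow \<sigma> \<rho> f m T a w" and i: "i \<noteq> j0" and t: "0 \<le> t" "t < T"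
      and before: "ereal t \<le> min (ereal (Tp \<alpha> m)) (T1 \<alpha> m j0 T a w)"
    let ?q = "qmax_threshold \<alpha> m"
    have q: "0 \<le> ?q" "real m * ?q\<^sup>2 \<le> 1" using M[OF m] by (simp_all add: qmax_threshold_def)
    have below: "qmax m (a s) (w s) < ?q" if "0 \<le> s" "s < t" for s
      by (rule qmax_lt_threshold_before_T1[OF that t(2), where j = j0]) (use before in simp)
    have "?q ^ 3 * sqrt (real m) * t \<le> Tp \<alpha> m * ?q ^ 3 * sqrt (real m)"
      using mult_left_mono[of t "Tp \<alpha> m" "?q ^ 3 * sqrt (real m)"] before q by (simp add: mult_ac)
    also have "\<dots> \<le> \<alpha> * max (1 / real m powr ((2*\<alpha> - 1)/2)) ((ln (real m))^5 / real m powr (5/2))"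
      using M[OF m] by simp
    finally have "K * ?q ^ 3 * sqrt (real m) * t
        \<le> K * \<alpha> * max (1 / real m powr ((2*\<alpha> - 1)/2)) ((ln (real m))^5 / real m powr (5/2))"
      using mult_left_mono[OF _ K] by (simp add: mult.assoc)
    moreover have "sqrt (\<Sum>k=1..m. (w t k i)\<^sup>2) \<le> sqrt (\<Sum>k=1..m. (w 0 k i)\<^sup>2) + K * ?q ^ 3 * sqrt (real m) * t"
      by (rule growth[OF flow i _ q t below]) (use M[OF m] in simp)
    ultimately show "sqrt (\<Sum>k=1..m. (w t k i)\<^sup>2) \<le> sqrt (\<Sum>k=1..m. (w 0 k i)\<^sup>2)
        + K * \<alpha> * max (1 / real m powr ((2*\<alpha> - 1)/2)) ((ln (real m))^5 / real m powr (5/2))"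
      by linarith
  qed
qed

lemma small_inner_until_exit_whp:
  assumes \<alpha>: "\<alpha> > 1/2" and \<delta>: "0 < \<delta>"
  shows "\<exists>M C. \<forall>m\<ge>M. \<exists>E\<in>sets (init_measure m \<alpha> :: ((nat \<Rightarrow> real) \<times> (nat \<Rightarrow> 'n \<Rightarrow> real)) measure).
    measure (init_measure m \<alpha>) E \<ge> 1 - \<delta> \<and> (\<forall>\<theta>0\<in>E. small_inner_until_exit \<sigma> \<rho> f \<alpha> j0 m C \<theta>0)"
proof -
  obtain M K where K: "K \<ge> 0" and m1: "\<And>m. M \<le> m \<Longrightarrow> 1 \<le> m"
    and bound: "\<And>m T a w i t. M \<le> m \<Longrightarrow> grad_flow \<sigma> \<rho> f m T a w \<Longrightarrow> i \<noteq> j0 \<Longrightarrow> 0 \<le> t \<Longrightarrow> t < T \<Longrightarrow>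
           ereal t \<le> min (ereal (Tp \<alpha> m)) (T1 \<alpha> m j0 T a w) \<Longrightarrow>
           sqrt (\<Sum>k=1..m. (w t k i)\<^sup>2) \<le> sqrt (\<Sum>k=1..m. (w 0 k i)\<^sup>2)
             + K * \<alpha> * max (1 / real m powr ((2*\<alpha> - 1)/2)) ((ln (real m))^5 / real m powr (5/2))"
    by (rule inner_weight_bound_eventually[OF \<alpha>]) blast
  show ?thesis
  proof (intro exI[of _ M] exI[of _ "sqrt (real CARD('n) / \<delta>) + K * \<alpha>"] allI impI)
    fix m assume m: "M \<le> m"
    let ?tg = "max (1 / real m powr ((2*\<alpha> - 1)/2)) ((ln (real m))^5 / real m powr (5/2))"
    obtain E where E: "E \<in> sets (init_measure m \<alpha> :: ((nat \<Rightarrow> real) \<times> (nat \<Rightarrow> 'n \<Rightarrow> real)) measure)"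
      "measure (init_measure m \<alpha> :: ((nat \<Rightarrow> real) \<times> (nat \<Rightarrow> 'n \<Rightarrow> real)) measure) E \<ge> 1 - \<delta>"
      and init: "\<And>\<theta> i. \<theta> \<in> E \<Longrightarrow> sqrt (\<Sum>k=1..m. (snd \<theta> k i)\<^sup>2)
          \<le> sqrt (real CARD('n) / \<delta>) * (1 / real m powr ((2*\<alpha> - 1)/2))"
      by (rule init_inner_weights_small[OF m1[OF m] \<delta>]) blast
    have small: "small_inner_until_exit \<sigma> \<rho> f \<alpha> j0 m (sqrt (real CARD('n) / \<delta>) + K * \<alpha>) \<theta>0" if "\<theta>0 \<in> E" for \<theta>0
      unfolding small_inner_until_exit_def
    proof (intro allI impI, elim conjE)
      fix T a w t i
      assume flow: "grad_flow \<sigma> \<rho> f m T a w" and \<theta>0: "\<forall>k\<in>{1..m}. a 0 k = fst \<theta>0 k \<and> w 0 k = snd \<theta>0 k"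
        and t: "0 \<le> t" "t < T" "ereal t \<le> min (ereal (Tp \<alpha> m)) (T1 \<alpha> m j0 T a w)" and i: "i \<noteq> j0"
      have "(\<Sum>k=1..m. (w 0 k i)\<^sup>2) = (\<Sum>k=1..m. (snd \<theta>0 k i)\<^sup>2)"
        using \<theta>0 by (intro sum.cong) auto
      then have "sqrt (\<Sum>k=1..m. (w 0 k i)\<^sup>2) \<le> sqrt (real CARD('n) / \<delta>) * (1 / real m powr ((2*\<alpha> - 1)/2))"
        using init[OF that, of i] by simp
      moreover have "sqrt (real CARD('n) / \<delta>) * (1 / real m powr ((2*\<alpha> - 1)/2)) \<le> sqrt (real CARD('n) / \<delta>) * ?tg"
        using \<delta> by (intro mult_left_mono) auto
      moreover note bound[OF m flow i t]
      ultimately show "sqrt (\<Sum>k=1..m. (w t k i)^2) \<le> (sqrt (real CARD('n) / \<delta>) + K * \<alpha>) * ?tg"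
        unfolding distrib_right by linarith
    qed
    show "\<exists>E\<in>sets (init_measure m \<alpha> :: ((nat \<Rightarrow> real) \<times> (nat \<Rightarrow> 'n \<Rightarrow> real)) measure).
        measure (init_measure m \<alpha>) E \<ge> 1 - \<delta> \<and>
        (\<forall>\<theta>0\<in>E. small_inner_until_exit \<sigma> \<rho> f \<alpha> j0 m (sqrt (real CARD('n) / \<delta>) + K * \<alpha>) \<theta>0)"
      by (intro bexI[OF _ E(1)] conjI E(2) ballI small)
  qed
qed

end

theorem proposition1:
  fixes \<rho> f :: "real^'n::finite \<Rightarrow> real"
    and \<sigma> \<sigma>1 \<sigma>2 \<sigma>3 :: "real \<Rightarrow> real"
    and CL \<alpha> :: real and j0 :: 'n
  assumes d2: "CARD('n) \<ge> 2"
    and alpha: "\<alpha> > 1/2"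
    and rho_meas: "\<rho> \<in> borel_measurable lborel"
    and rho_nonneg: "\<forall>x. \<rho> x \<ge> 0"
    and rho_int: "integrable lborel \<rho>"
    and rho_prob: "(\<integral>x. \<rho> x \<partial>lborel) = 1"
    and rho_supp: "compact (closure {x. \<rho> x \<noteq> 0})"
    and rho_var: "\<forall>i. (\<integral>x. (x $ i)^2 * \<rho> x \<partial>lborel) = 1"
    and rho_cov: "\<forall>i j. i \<noteq> j \<longrightarrow> (\<integral>x. x $ i * x $ j * \<rho> x \<partial>lborel) = 0"
    and f_meas: "f \<in> borel_measurable lborel"
    and f_bdd: "bounded (f ` closure {x. \<rho> x \<noteq> 0})"
    and f_corr: "\<forall>i. (\<integral>x. f x * x $ i * \<rho> x \<partial>lborel) = (if i = j0 then 1 else 0)"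
    and s1: "\<forall>x. (\<sigma> has_real_derivative \<sigma>1 x) (at x)"
    and s2: "\<forall>x. (\<sigma>1 has_real_derivative \<sigma>2 x) (at x)"
    and s3: "\<forall>x. (\<sigma>2 has_real_derivative \<sigma>3 x) (at x)"
    and s0: "\<sigma> 0 = 0" "\<sigma>1 0 = 1" "\<sigma>2 0 = 0"
    and sL: "\<forall>x. \<bar>\<sigma>3 x\<bar> \<le> CL"
  shows "\<forall>\<delta>. 0 < \<delta> \<and> \<delta> < 1 \<longrightarrow>
    (\<exists>M::nat. \<exists>C::real. \<forall>m\<ge>M.
      \<exists>E\<in>sets (init_measure m \<alpha> :: ((nat \<Rightarrow> real) \<times> (nat \<Rightarrow> 'n \<Rightarrow> real)) measure).
        measure (init_measure m \<alpha>) E \<ge> 1 - \<delta> \<and>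
        (\<forall>\<theta>0\<in>E. \<forall>T a w.
           grad_flow \<sigma> \<rho> f m T a w \<and> (\<forall>k\<in>{1..m}. a 0 k = fst \<theta>0 k \<and> w 0 k = snd \<theta>0 k)
           \<longrightarrow> (\<forall>t i. 0 \<le> t \<and> t < T \<and> ereal t \<le> min (ereal (Tp \<alpha> m)) (T1 \<alpha> m j0 T a w)
                     \<and> i \<noteq> j0 \<longrightarrow>
                 sqrt (\<Sum>k=1..m. (w t k i)^2)
                   \<le> C * max (1 / real m powr ((2*\<alpha> - 1)/2)) ((ln (real m))^5 / real m powr (5/2)))))"
proof -
  interpret data_setting \<sigma> \<sigma>1 \<sigma>2 \<sigma>3 CL \<rho> f j0
    by unfold_locales (use assms in auto)
  show ?thesis
    by (intro allI impI, elim conjE)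
       (rule small_inner_until_exit_whp[OF alpha, unfolded small_inner_until_exit_def])
qed

end
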